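(* Let $m$ be a positive integer with $m<n$. The set of all elements of $D_n$ of the form $$w_1^{j_1}\cdot t_2^{i_2}\cdot w_2^{j_2}\cdot t_3^{i_3}\cdots w_{m-1}^{j_{m-1}}\cdot t_m^{i_m}\cdot w_m^{j_m},$$ with $0\le j_k\le 1$ for $1\le k\le m$ and $0\le i_k\le k-1$ for $2\le k\le m$ (for $m=1$ this is just $w_1^{j_1}$), is a subgroup of $D_n$ isomorphic to the hyperoctahedral group $B_m$.
   Context: $D_n$ ($n\ge 2$) is the Coxeter group with generators $s_{1'},s_1,\dots,s_{n-1}$ and relations $s^2=1$ for each generator, $(s_i s_{i+1})^3=1$, $(s_is_j)^2=1$ for $|i-j|\ge 2$, $(s_{1'}s_2)^3=1$, and $(s_{1'}s_i)^2=1$ for $i\ne 2$. For $2\le k\le n$, $t_k=s_1 s_2\cdots s_{k-1}$; for $1\le k\le n-1$, $w_k=s_k s_{k-1}\cdots s_2 s_1 s_{1'} s_2\cdots s_k$. $B_m$ denotes the group of signed permutations of $\{\pm1,\dots,\pm m\}$ (bijections $\sigma$ with $\sigma(-i)=-\sigma(i)$), of order $2^m m!$. *)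

theory Defs
  imports "HOL-Algebra.Algebra"
begin

text \<open>Coxeter group D_n by generators and relations.
  Letters: 0 encodes s_{1'}, and i (1 <= i <= n-1) encodes s_i. Words are lists of letters < n.\<close>

definition D_relators :: "nat \<Rightarrow> nat list set" where
  "D_relators n =
     {[g, g] | g. g < n}
   \<union> {concat (replicate 3 [i, i + 1]) | i. 1 \<le> i \<and> i + 1 < n}
   \<union> {concat (replicate 2 [i, j]) | i j. 1 \<le> i \<and> 1 \<le> j \<and> i < n \<and> j < n \<and> (i + 2 \<le> j \<or> j + 2 \<le> i)}
   \<union> (if 2 < n then {concat (replicate 3 [0, 2])} else {})
   \<union> {concat (replicate 2 [0, i]) | i. 1 \<le> i \<and> i < n \<and> i \<noteq> 2}"

inductive Deq :: "nat \<Rightarrow> nat list \<Rightarrow> nat list \<Rightarrow> bool" for n where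
  Deq_refl: "Deq n w w"
| Deq_sym: "Deq n u v \<Longrightarrow> Deq n v u"
| Deq_trans: "Deq n u v \<Longrightarrow> Deq n v w \<Longrightarrow> Deq n u w"
| Deq_rel: "r \<in> D_relators n \<Longrightarrow> Deq n (a @ r @ b) (a @ b)"

definition Dclass :: "nat \<Rightarrow> nat list \<Rightarrow> nat list set" where
  "Dclass n w = {v. Deq n w v}"

definition D_group :: "nat \<Rightarrow> nat list set monoid" where
  "D_group n = \<lparr> carrier = Dclass n ` lists {..<n},
                 monoid.mult = (\<lambda>A B. \<Union>a\<in>A. \<Union>b\<in>B. Dclass n (a @ b)),
                 one = Dclass n [] \<rparr>"

text \<open>Words for t_k = s_1 s_2 ... s_{k-1} and w_k = s_k ... s_2 s_1 s_{1'} s_2 ... s_k.\<close>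
definition t_word :: "nat \<Rightarrow> nat list" where
  "t_word k = [1..<k]"

definition w_word :: "nat \<Rightarrow> nat list" where
  "w_word k = rev [1..<k + 1] @ [0] @ [2..<k + 1]"

definition word_pow :: "nat list \<Rightarrow> nat \<Rightarrow> nat list" where
  "word_pow u e = concat (replicate e u)"

definition normal_word :: "nat \<Rightarrow> (nat \<Rightarrow> nat) \<Rightarrow> (nat \<Rightarrow> nat) \<Rightarrow> nat list" where
  "normal_word m j i =
     concat (map (\<lambda>k. (if 2 \<le> k then word_pow (t_word k) (i k) else []) @ word_pow (w_word k) (j k))
                 [1..<m + 1])"

definition H_set :: "nat \<Rightarrow> nat \<Rightarrow> nat list set set" where
  "H_set n m = {Dclass n (normal_word m j i) | j i.
                  (\<forall>k\<in>{1..m}. j k \<le> 1) \<and> (\<forall>k\<in>{2..m}. i k \<le> k - 1)}"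

text \<open>Hyperoctahedral group B_m: signed permutations of {+-1,...,+-m}
  (as functions on int, identity outside), composition as product.\<close>
definition signed_set :: "nat \<Rightarrow> int set" where
  "signed_set m = {-int m..int m} - {0}"

definition B_group :: "nat \<Rightarrow> (int \<Rightarrow> int) monoid" where
  "B_group m = \<lparr> carrier = {\<sigma>. bij_betw \<sigma> (signed_set m) (signed_set m)
                            \<and> (\<forall>x\<in>signed_set m. \<sigma> (- x) = - \<sigma> x)
                            \<and> (\<forall>x. x \<notin> signed_set m \<longrightarrow> \<sigma> x = x)},
                 monoid.mult = (\<circ>),
                 one = id \<rparr>"

end

theory Submission
  imports Defs
begin

(* Letters act on \<plusminus>{1..n} by signed permutations: s_i swaps \<plusminus>i with \<plusminus>(i+1), and s_1'
   sends 1 to -2 and 2 to -1. This respects the defining relations; t_k acts as the cycle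
   (1 2 ... k) and w_k negates 1 and k+1.

   Closure: by induction on k, H_(k+1) = H_k <t_(k+1)> {1, w_(k+1)}. Assuming H_k is a subgroup,
   rewriting with the Coxeter relations shows that right multiplication by each generator maps
   the coset products H_k <t_(k+1)> and H_(k+1) into themselves.

   Isomorphism: restricting the action to \<plusminus>{1..m} is a homomorphism H_m -> B_m. Distinct normal
   words act differently (the exponents of w_(k+1) and t_(k+1) are read off from the images of
   k+2 and k+1), and the image of m+1 is determined by the action on \<plusminus>{1..m} because every
   element changes an even number of signs. So the map is injective on the 2^m m! normal words,
   while |B_m| <= 2^m m!. *)

declare Deq.Deq_trans [trans]

lemma Deq_cong: "Deq n u v \<Longrightarrow> Deq n (a @ u @ b) (a @ v @ b)"
proof (induction rule: Deq.induct)
  case (Deq_refl w) then show ?case by (rule Deq.Deq_refl)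
next
  case (Deq_sym u v) then show ?case by (blast intro: Deq.Deq_sym)
next
  case (Deq_trans u v w) then show ?case by (blast intro: Deq.Deq_trans)
next
  case (Deq_rel r a' b')
  have "Deq n ((a @ a') @ r @ (b' @ b)) ((a @ a') @ (b' @ b))" by (rule Deq.Deq_rel[OF Deq_rel])
  then show ?case by simp
qed

lemma Deq_append_left: "Deq n u u' \<Longrightarrow> Deq n (a @ u) (a @ u')"
  using Deq_cong[of n u u' a "[]"] by simp

lemma Deq_append_right: "Deq n u u' \<Longrightarrow> Deq n (u @ b) (u' @ b)"
  using Deq_cong[of n u u' "[]" b] by simp

lemma Deq_append: "Deq n u u' \<Longrightarrow> Deq n v v' \<Longrightarrow> Deq n (u @ v) (u' @ v')"
  by (metis Deq.Deq_trans Deq_append_left Deq_append_right)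

lemma Deq_relator: "r \<in> D_relators n \<Longrightarrow> Deq n r []"
  using Deq.Deq_rel[of r n "[]" "[]"] by simp

lemma set_relator: "r \<in> D_relators n \<Longrightarrow> set r \<subseteq> {..<n}"
  unfolding D_relators_def by (auto simp: numeral_3_eq_3 numeral_2_eq_2 split: if_splits)

lemma Deq_letter_square: "g < n \<Longrightarrow> Deq n [g, g] []"
  by (rule Deq_relator) (auto simp: D_relators_def)

lemma Deq_append_rev: "set v \<subseteq> {..<n} \<Longrightarrow> Deq n (v @ rev v) []"
proof (induction v)
  case Nil then show ?case by (simp add: Deq.Deq_refl)
next
  case (Cons g v)
  have "Deq n ([g] @ (v @ rev v) @ [g]) ([g] @ [] @ [g])"
    by (rule Deq_cong, rule Cons.IH) (use Cons.prems in auto)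
  also have "Deq n ([g] @ [] @ [g]) []" using Deq_letter_square[of g n] Cons.prems by simp
  finally show ?case by simp
qed

lemma Deq_rev_append: "set v \<subseteq> {..<n} \<Longrightarrow> Deq n (rev v @ v) []"
  using Deq_append_rev[of "rev v" n] by simp

lemma Deq_inverse_unique:
  assumes "Deq n (u @ v) []" "set v \<subseteq> {..<n}" shows "Deq n u (rev v)"
proof -
  have "Deq n u (u @ v @ rev v)"
    using Deq_append_left[OF Deq_append_rev[OF assms(2)], of u] by (simp add: Deq.Deq_sym)
  also have "Deq n (u @ v @ rev v) (rev v)" using Deq_append_right[OF assms(1), of "rev v"] by simp
  finally show ?thesis .
qed

lemma Deq_conj_rev:
  assumes "Deq n (v @ x) (y @ v)" "set v \<subseteq> {..<n}"
  shows "Deq n (rev v @ y) (x @ rev v)"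
proof -
  have "Deq n (rev v @ y) (rev v @ y @ (v @ rev v))"
    using Deq_append_left[OF Deq_append_rev[OF assms(2)], of "rev v @ y"] by (simp add: Deq.Deq_sym)
  also have "rev v @ y @ (v @ rev v) = rev v @ (y @ v) @ rev v" by simp
  also have "Deq n (rev v @ (y @ v) @ rev v) (rev v @ (v @ x) @ rev v)"
    by (rule Deq_cong, rule Deq.Deq_sym, rule assms(1))
  also have "rev v @ (v @ x) @ rev v = (rev v @ v) @ x @ rev v" by simp
  also have "Deq n ((rev v @ v) @ x @ rev v) ([] @ x @ rev v)"
    by (rule Deq_append_right, rule Deq_rev_append[OF assms(2)])
  finally show ?thesis by simp
qed

lemma Deq_rev: "Deq n u v \<Longrightarrow> Deq n (rev u) (rev v)"
proof (induction rule: Deq.induct)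
  case (Deq_refl w) then show ?case by (rule Deq.Deq_refl)
next
  case (Deq_sym u v) then show ?case by (blast intro: Deq.Deq_sym)
next
  case (Deq_trans u v w) then show ?case by (blast intro: Deq.Deq_trans)
next
  case (Deq_rel r a b)
  have "Deq n (rev r) []"
    using Deq_inverse_unique[of n "[]" r] Deq_relator[OF Deq_rel] set_relator[OF Deq_rel]
    by (simp add: Deq.Deq_sym)
  then have "Deq n (rev b @ rev r @ rev a) (rev b @ [] @ rev a)" by (rule Deq_cong)
  then show ?case by simp
qed

lemma Dclass_eq_iff: "Dclass n u = Dclass n v \<longleftrightarrow> Deq n u v"
  unfolding Dclass_def by (blast intro: Deq.Deq_refl Deq.Deq_sym Deq.Deq_trans)

lemma Dclass_self: "u \<in> Dclass n u"
  unfolding Dclass_def by (simp add: Deq.Deq_refl)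

lemma D_mult: "Dclass n u \<otimes>\<^bsub>D_group n\<^esub> Dclass n v = Dclass n (u @ v)"
proof -
  have "Dclass n (a @ b) = Dclass n (u @ v)" if "a \<in> Dclass n u" "b \<in> Dclass n v" for a b
    using that Deq_append[of n u a v b] unfolding Dclass_eq_iff by (simp add: Dclass_def Deq.Deq_sym)
  then have "(\<Union>a\<in>Dclass n u. \<Union>b\<in>Dclass n v. Dclass n (a @ b)) = Dclass n (u @ v)"
    using Dclass_self[of u n] Dclass_self[of v n] by blast
  then show ?thesis unfolding D_group_def by simp
qed

lemma D_one: "\<one>\<^bsub>D_group n\<^esub> = Dclass n []"
  unfolding D_group_def by simp

lemma D_carrier: "carrier (D_group n) = Dclass n ` lists {..<n}"
  unfolding D_group_def by simp

lemma group_D_group: "group (D_group n)"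
proof (rule groupI)
  fix x y assume "x \<in> carrier (D_group n)" "y \<in> carrier (D_group n)"
  then show "x \<otimes>\<^bsub>D_group n\<^esub> y \<in> carrier (D_group n)"
    by (auto simp: D_carrier D_mult intro!: imageI)
next
  show "\<one>\<^bsub>D_group n\<^esub> \<in> carrier (D_group n)" by (simp add: D_carrier D_one)
next
  fix x y z assume "x \<in> carrier (D_group n)" "y \<in> carrier (D_group n)" "z \<in> carrier (D_group n)"
  then show "x \<otimes>\<^bsub>D_group n\<^esub> y \<otimes>\<^bsub>D_group n\<^esub> z = x \<otimes>\<^bsub>D_group n\<^esub> (y \<otimes>\<^bsub>D_group n\<^esub> z)"
    by (auto simp: D_carrier D_mult)
next
  fix x assume "x \<in> carrier (D_group n)"
  then show "\<one>\<^bsub>D_group n\<^esub> \<otimes>\<^bsub>D_group n\<^esub> x = x" by (auto simp: D_carrier D_mult D_one)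
next
  fix x assume "x \<in> carrier (D_group n)"
  then obtain u where u: "x = Dclass n u" "u \<in> lists {..<n}" by (auto simp: D_carrier)
  then have "Dclass n (rev u) \<otimes>\<^bsub>D_group n\<^esub> x = \<one>\<^bsub>D_group n\<^esub>"
    using Deq_rev_append[of u n] by (auto simp: D_mult D_one Dclass_eq_iff)
  moreover have "Dclass n (rev u) \<in> carrier (D_group n)" using u by (auto simp: D_carrier)
  ultimately show "\<exists>y\<in>carrier (D_group n). y \<otimes>\<^bsub>D_group n\<^esub> x = \<one>\<^bsub>D_group n\<^esub>" by blast
qed

lemma D_inv:
  assumes "u \<in> lists {..<n}" shows "inv\<^bsub>D_group n\<^esub> (Dclass n u) = Dclass n (rev u)"
proof (rule group.inv_equality[OF group_D_group])
  show "Dclass n (rev u) \<otimes>\<^bsub>D_group n\<^esub> Dclass n u = \<one>\<^bsub>D_group n\<^esub>"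
    using Deq_rev_append[of u n] assms by (auto simp: D_mult D_one Dclass_eq_iff)
qed (use assms in \<open>auto simp: D_carrier\<close>)

lemma Deq_braid: assumes "1 \<le> i" "i + 1 < n" shows "Deq n [i, i+1, i] [i+1, i, i+1]"
proof -
  have "concat (replicate 3 [i, i+1]) \<in> D_relators n"
    unfolding D_relators_def using assms by blast
  then have "Deq n ([i, i+1, i] @ [i+1, i, i+1]) []"
    by (auto dest!: Deq_relator simp: numeral_3_eq_3)
  from Deq_inverse_unique[OF this] show ?thesis using assms by auto
qed

lemma Deq_braid_0_2: assumes "2 < n" shows "Deq n [0, 2, 0] [2, 0, 2]"
proof -
  have "concat (replicate 3 [0, 2]) \<in> D_relators n"
    unfolding D_relators_def using assms by simp
  then have "Deq n ([0, 2, 0] @ [2, 0, 2]) []"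
    by (auto dest!: Deq_relator simp: numeral_3_eq_3)
  from Deq_inverse_unique[OF this] show ?thesis using assms by auto
qed

definition commuting_letters :: "nat \<Rightarrow> nat \<Rightarrow> bool" where
  "commuting_letters g x \<longleftrightarrow>
     g = x \<or> (1 \<le> g \<and> 1 \<le> x \<and> (g + 2 \<le> x \<or> x + 2 \<le> g)) \<or> (g = 0 \<and> x \<noteq> 2) \<or> (x = 0 \<and> g \<noteq> 2)"

lemma commuting_lettersI:
  "x + 2 \<le> g \<or> g + 2 \<le> x \<Longrightarrow> (x = 0 \<longrightarrow> 3 \<le> g) \<Longrightarrow> (g = 0 \<longrightarrow> 3 \<le> x) \<Longrightarrow> commuting_letters g x"
  unfolding commuting_letters_def by auto

lemma Deq_commute_letters:
  assumes "commuting_letters g x" "g < n" "x < n" shows "Deq n [g, x] [x, g]"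
proof -
  have "g = x \<or> concat (replicate 2 [g, x]) \<in> D_relators n \<or> concat (replicate 2 [x, g]) \<in> D_relators n"
    using assms unfolding commuting_letters_def D_relators_def by auto
  then consider "g = x" | "Deq n ([g, x] @ [g, x]) []" | "Deq n ([x, g] @ [x, g]) []"
    by (auto dest!: Deq_relator simp: numeral_2_eq_2)
  then show ?thesis
  proof cases
    case 1 then show ?thesis by (simp add: Deq.Deq_refl)
  next
    case 2 then show ?thesis using Deq_inverse_unique assms by fastforce
  next
    case 3 then show ?thesis using Deq_inverse_unique[of n "[x, g]" "[x, g]"] assms
      by (auto intro: Deq.Deq_sym)
  qed
qed

lemma Deq_commute_0_1: "2 \<le> n \<Longrightarrow> Deq n [0, 1] [1, 0]"
  by (rule Deq_commute_letters) (auto simp: commuting_letters_def)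

lemma Deq_commute_letter_word:
  assumes "\<forall>y\<in>set v. commuting_letters g y" "g < n" "set v \<subseteq> {..<n}"
  shows "Deq n ([g] @ v) (v @ [g])"
  using assms
proof (induction v)
  case Nil then show ?case by (simp add: Deq.Deq_refl)
next
  case (Cons y v)
  have "Deq n ([g, y] @ v) ([y, g] @ v)"
    by (rule Deq_append_right, rule Deq_commute_letters) (use Cons.prems in auto)
  also have "[y, g] @ v = [y] @ ([g] @ v)" by simp
  also have "Deq n ([y] @ ([g] @ v)) ([y] @ (v @ [g]))"
    by (rule Deq_append_left, rule Cons.IH) (use Cons.prems in auto)
  finally show ?case by simp
qed

lemma Deq_commute_words:
  assumes "\<forall>x\<in>set u. \<forall>y\<in>set v. commuting_letters x y" "set u \<subseteq> {..<n}" "set v \<subseteq> {..<n}"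
  shows "Deq n (u @ v) (v @ u)"
  using assms
proof (induction u)
  case Nil then show ?case by (simp add: Deq.Deq_refl)
next
  case (Cons x u)
  have "Deq n ([x] @ (u @ v)) ([x] @ (v @ u))"
    by (rule Deq_append_left, rule Cons.IH) (use Cons.prems in auto)
  also have "[x] @ (v @ u) = ([x] @ v) @ u" by simp
  also have "Deq n (([x] @ v) @ u) ((v @ [x]) @ u)"
    by (rule Deq_append_right, rule Deq_commute_letter_word) (use Cons.prems in auto)
  finally show ?case by simp
qed

lemma upt_split_at_pair: assumes "a \<le> i" "i + 2 \<le> b" shows "[a..<b] = [a..<i] @ [i, i+1] @ [i+2..<b]"
proof -
  have "[a..<b] = [a..<i] @ [i..<b]" using assms upt_add_eq_append[of a i "b - i"] by simp
  moreover have "[i..<b] = i # (i+1) # [i+2..<b]" using assms by (simp add: upt_conv_Cons)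
  ultimately show ?thesis by simp
qed

lemma Deq_cycle_conj_letter:
  assumes "1 \<le> a" "a \<le> i" "i + 2 \<le> b" "b \<le> n"
  shows "Deq n ([a..<b] @ [i]) ([i+1] @ [a..<b])"
proof -
  have "[a..<b] @ [i] = [a..<i] @ [i, i+1] @ ([i+2..<b] @ [i])" using upt_split_at_pair[OF assms(2,3)] by simp
  also have "Deq n ([a..<i] @ [i, i+1] @ ([i+2..<b] @ [i])) ([a..<i] @ [i, i+1] @ ([i] @ [i+2..<b]))"
    by (rule Deq_append_left, rule Deq_append_left, rule Deq.Deq_sym, rule Deq_commute_letter_word)
      (use assms in \<open>auto simp: commuting_letters_def\<close>)
  also have "[a..<i] @ [i, i+1] @ ([i] @ [i+2..<b]) = [a..<i] @ [i, i+1, i] @ [i+2..<b]" by simp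
  also have "Deq n ([a..<i] @ [i, i+1, i] @ [i+2..<b]) ([a..<i] @ [i+1, i, i+1] @ [i+2..<b])"
    by (rule Deq_cong, rule Deq_braid) (use assms in auto)
  also have "[a..<i] @ [i+1, i, i+1] @ [i+2..<b] = ([a..<i] @ [i+1]) @ [i, i+1] @ [i+2..<b]" by simp
  also have "Deq n (([a..<i] @ [i+1]) @ [i, i+1] @ [i+2..<b]) (([i+1] @ [a..<i]) @ [i, i+1] @ [i+2..<b])"
    by (rule Deq_append_right, rule Deq.Deq_sym, rule Deq_commute_letter_word)
      (use assms in \<open>auto simp: commuting_letters_def\<close>)
  also have "([i+1] @ [a..<i]) @ [i, i+1] @ [i+2..<b] = [i+1] @ [a..<b]"
    using upt_split_at_pair[OF assms(2,3)] by simp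
  finally show ?thesis .
qed

lemma word_pow_0 [simp]: "word_pow u 0 = []"
  by (simp add: word_pow_def)

lemma word_pow_Suc: "word_pow u (Suc j) = u @ word_pow u j"
  by (simp add: word_pow_def)

lemma word_pow_add: "word_pow u (i + j) = word_pow u i @ word_pow u j"
  by (simp add: word_pow_def replicate_add)

lemma word_pow_Suc': "word_pow u (Suc j) = word_pow u j @ u"
  using word_pow_add[of u j 1] by (simp add: word_pow_def)

lemma word_pow_1 [simp]: "word_pow u (Suc 0) = u"
  by (simp add: word_pow_def)

lemma word_pow_Nil [simp]: "word_pow [] j = []"
  by (simp add: word_pow_def)

lemma set_word_pow: "set (word_pow u j) \<subseteq> set u"
  by (auto simp: word_pow_def)

lemma Deq_word_pow: "Deq n u v \<Longrightarrow> Deq n (word_pow u j) (word_pow v j)"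
  by (induction j) (auto simp: word_pow_Suc Deq.Deq_refl intro: Deq_append)

lemma Deq_cycle_pow_conj_letter:
  assumes "1 \<le> a" "a \<le> i" "i + j + 1 \<le> b" "b \<le> n"
  shows "Deq n (word_pow [a..<b] j @ [i]) ([i+j] @ word_pow [a..<b] j)"
  using assms
proof (induction j arbitrary: i)
  case 0 then show ?case by (simp add: Deq.Deq_refl)
next
  case (Suc j)
  have "word_pow [a..<b] (Suc j) @ [i] = [a..<b] @ (word_pow [a..<b] j @ [i])"
    by (simp add: word_pow_Suc)
  also have "Deq n ([a..<b] @ (word_pow [a..<b] j @ [i])) ([a..<b] @ ([i+j] @ word_pow [a..<b] j))"
    by (rule Deq_append_left, rule Suc.IH) (use Suc.prems in auto)
  also have "[a..<b] @ ([i+j] @ word_pow [a..<b] j) = ([a..<b] @ [i+j]) @ word_pow [a..<b] j" by simp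
  also have "Deq n (([a..<b] @ [i+j]) @ word_pow [a..<b] j) (([i+j+1] @ [a..<b]) @ word_pow [a..<b] j)"
    by (rule Deq_append_right, rule Deq_cycle_conj_letter) (use Suc.prems in auto)
  finally show ?case by (simp add: word_pow_Suc)
qed

text \<open>Pushing the letters of \<open>s\<^sub>a \<dots> s\<^sub>a\<^sub>+\<^sub>j\<^sub>-\<^sub>1\<close> through the powers of the cycle \<open>c\<close> turns
  \<open>c\<^sup>j\<close> into \<open>(s\<^sub>a c)\<^sup>j\<close>, and \<open>s\<^sub>a c\<close> is the shorter cycle starting at \<open>a + 1\<close>.\<close>
lemma Deq_cycle_order:
  assumes "1 \<le> a" "a + d = b" "b \<le> n"
  shows "Deq n (word_pow [a..<b] (Suc d)) []"
  using assms
proof (induction d arbitrary: a)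
  case 0 then show ?case by (simp add: Deq.Deq_refl)
next
  case (Suc d)
  let ?c = "[a..<b]"
  have push: "Deq n ([a..<a+j] @ word_pow ?c j) (word_pow ([a] @ ?c) j)" if "j \<le> Suc d" for j
    using that
  proof (induction j)
    case 0 then show ?case by (simp add: Deq.Deq_refl)
  next
    case (Suc j)
    have "Deq n ([a..<a+Suc j] @ word_pow ?c (Suc j)) ([a..<a+j] @ ([a+j] @ word_pow ?c j) @ ?c)"
      by (simp add: word_pow_Suc' Deq.Deq_refl)
    also have "Deq n ([a..<a+j] @ ([a+j] @ word_pow ?c j) @ ?c) ([a..<a+j] @ (word_pow ?c j @ [a]) @ ?c)"
      by (rule Deq_cong, rule Deq.Deq_sym, rule Deq_cycle_pow_conj_letter)
        (use Suc.prems \<open>1 \<le> a\<close> \<open>a + Suc d = b\<close> \<open>b \<le> n\<close> in auto)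
    also have "[a..<a+j] @ (word_pow ?c j @ [a]) @ ?c = ([a..<a+j] @ word_pow ?c j) @ ([a] @ ?c)" by simp
    also have "Deq n (([a..<a+j] @ word_pow ?c j) @ ([a] @ ?c)) (word_pow ([a] @ ?c) j @ ([a] @ ?c))"
      by (rule Deq_append_right, rule Suc.IH) (use Suc.prems in auto)
    finally show ?case by (simp add: word_pow_Suc')
  qed
  have "word_pow ?c (Suc (Suc d)) = [a..<a + Suc d] @ word_pow ?c (Suc d)"
    using Suc.prems by (simp add: word_pow_Suc)
  also have "Deq n ([a..<a + Suc d] @ word_pow ?c (Suc d)) (word_pow ([a] @ ?c) (Suc d))"
    by (rule push) simp
  also have "Deq n (word_pow ([a] @ ?c) (Suc d)) (word_pow [a+1..<b] (Suc d))"
  proof (rule Deq_word_pow)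
    have "Deq n ([a, a] @ [a+1..<b]) ([] @ [a+1..<b])"
      by (rule Deq_append_right, rule Deq_letter_square) (use Suc.prems in auto)
    then show "Deq n ([a] @ ?c) [a+1..<b]" using Suc.prems by (simp add: upt_conv_Cons)
  qed
  also have "Deq n (word_pow [a+1..<b] (Suc d)) []" by (rule Suc.IH) (use Suc.prems in auto)
  finally show ?case .
qed

lemma t_word_Suc: "1 \<le> k \<Longrightarrow> t_word (Suc k) = t_word k @ [k]"
  by (simp add: t_word_def)

lemma set_t_word: "set (t_word k) = {1..<k}"
  by (simp add: t_word_def)

lemma Deq_letter_t_words: assumes "1 \<le> i" "i < n" shows "Deq n [i] (rev (t_word i) @ t_word (Suc i))"
proof -
  have "Deq n [i] ((rev (t_word i) @ t_word i) @ [i])"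
    using Deq_append_right[OF Deq_rev_append, of "t_word i" n "[i]"] assms
    by (simp add: set_t_word Deq.Deq_sym subset_iff)
  then show ?thesis using assms by (simp add: t_word_Suc)
qed

lemma w_word_1 [simp]: "w_word (Suc 0) = [1, 0]"
  by (simp add: w_word_def)

lemma w_word_2: "w_word 2 = [2, 1, 0, 2]"
  by (simp add: w_word_def upt_rec)

lemma w_word_Suc: "1 \<le> k \<Longrightarrow> w_word (Suc k) = [Suc k] @ w_word k @ [Suc k]"
  by (simp add: w_word_def)

lemma w_word_conv: "1 \<le> k \<Longrightarrow> w_word k = rev [2..<k+1] @ [1, 0] @ [2..<k+1]"
  by (simp add: w_word_def upt_conv_Cons numeral_2_eq_2)

lemma w_word_conv_w_word_2: "2 \<le> k \<Longrightarrow> w_word k = rev [3..<k+1] @ w_word 2 @ [3..<k+1]"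
  by (simp add: w_word_conv w_word_2 upt_conv_Cons)

lemma set_w_word: "set (w_word k) \<subseteq> {..k}"
  by (auto simp: w_word_def)


lemma Deq_w1_square: assumes "2 \<le> n" shows "Deq n ([1, 0] @ [1, 0]) []"
proof -
  have "Deq n [1,0,1,0] [0,1,1,0]" using Deq_cong[OF Deq.Deq_sym[OF Deq_commute_0_1[OF assms]], of "[]" "[1,0]"] by simp
  also have "Deq n [0,1,1,0] [0,0]" using Deq_cong[OF Deq_letter_square[of 1 n], of "[0]" "[0]"] assms by simp
  also have "Deq n [0,0] []" by (rule Deq_letter_square) (use assms in simp)
  finally show ?thesis by simp
qed

lemma Deq_t3_w1: assumes "3 \<le> n" shows "Deq n [1,2,1,0] [1,0,2,1,0,2,1,2]"
proof -
  have s01: "Deq n [0,1] [1,0]" and s1s2: "Deq n [1,2,1] [2,1,2]" and s0s2: "Deq n [0,2,0] [2,0,2]"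
    using Deq_commute_0_1[of n] Deq_braid[of 1 n] Deq_braid_0_2[of n] assms by (simp_all add: numeral_2_eq_2)
  have sq: "Deq n [] [g, g]" if "g < n" for g using Deq_letter_square[OF that] by (rule Deq.Deq_sym)
  have "Deq n [1,2,1,0] [1,2,0,1]" using Deq_cong[OF Deq.Deq_sym[OF s01], of "[1,2]" "[]"] by simp
  also have "Deq n [1,2,0,1] [1,0,0,2,0,1]" using Deq_cong[OF sq[of 0], of "[1]" "[2,0,1]"] assms by simp
  also have "Deq n [1,0,0,2,0,1] [1,0,2,0,2,1]" using Deq_cong[OF s0s2, of "[1,0]" "[1]"] by simp
  also have "Deq n [1,0,2,0,2,1] [1,0,2,1,1,0,2,1]" using Deq_cong[OF sq[of 1], of "[1,0,2]" "[0,2,1]"] assms by simp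
  also have "Deq n [1,0,2,1,1,0,2,1] [1,0,2,1,0,1,2,1]" using Deq_cong[OF Deq.Deq_sym[OF s01], of "[1,0,2,1]" "[2,1]"] by simp
  also have "Deq n [1,0,2,1,0,1,2,1] [1,0,2,1,0,2,1,2]" using Deq_cong[OF s1s2, of "[1,0,2,1,0]" "[]"] by simp
  finally show ?thesis .
qed

lemma Deq_w1_w2_commute: assumes "3 \<le> n" shows "Deq n [1,0,2,1,0,2] [2,1,0,2,1,0]"
proof -
  have s01: "Deq n [0,1] [1,0]" and s1s2: "Deq n [1,2,1] [2,1,2]" and s0s2: "Deq n [0,2,0] [2,0,2]"
    using Deq_commute_0_1[of n] Deq_braid[of 1 n] Deq_braid_0_2[of n] assms by (simp_all add: numeral_2_eq_2)
  have "Deq n [1,0,2,1,0,2] [0,1,2,1,0,2]" using Deq_cong[OF Deq.Deq_sym[OF s01], of "[]" "[2,1,0,2]"] by simp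
  also have "Deq n [0,1,2,1,0,2] [0,2,1,2,0,2]" using Deq_cong[OF s1s2, of "[0]" "[0,2]"] by simp
  also have "Deq n [0,2,1,2,0,2] [0,2,1,0,2,0]" using Deq_cong[OF Deq.Deq_sym[OF s0s2], of "[0,2,1]" "[]"] by simp
  also have "Deq n [0,2,1,0,2,0] [0,2,0,1,2,0]" using Deq_cong[OF Deq.Deq_sym[OF s01], of "[0,2]" "[2,0]"] by simp
  also have "Deq n [0,2,0,1,2,0] [2,0,2,1,2,0]" using Deq_cong[OF s0s2, of "[]" "[1,2,0]"] by simp
  also have "Deq n [2,0,2,1,2,0] [2,0,1,2,1,0]" using Deq_cong[OF Deq.Deq_sym[OF s1s2], of "[2,0]" "[0]"] by simp
  also have "Deq n [2,0,1,2,1,0] [2,1,0,2,1,0]" using Deq_cong[OF s01, of "[2]" "[2,1,0]"] by simp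
  finally show ?thesis .
qed

lemma Deq_w2_s1: assumes "3 \<le> n" shows "Deq n [2,1,0,2,1] [1,1,0,2,1,0,2]"
proof -
  have s01: "Deq n [0,1] [1,0]" and s1s2: "Deq n [1,2,1] [2,1,2]" and s0s2: "Deq n [0,2,0] [2,0,2]"
    using Deq_commute_0_1[of n] Deq_braid[of 1 n] Deq_braid_0_2[of n] assms by (simp_all add: numeral_2_eq_2)
  have "Deq n [2,1,0,2,1] [2,0,1,2,1]" using Deq_cong[OF Deq.Deq_sym[OF s01], of "[2]" "[2,1]"] by simp
  also have "Deq n [2,0,1,2,1] [2,0,2,1,2]" using Deq_cong[OF s1s2, of "[2,0]" "[]"] by simp
  also have "Deq n [2,0,2,1,2] [0,2,0,1,2]" using Deq_cong[OF Deq.Deq_sym[OF s0s2], of "[]" "[1,2]"] by simp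
  also have "Deq n [0,2,0,1,2] [0,2,1,0,2]" using Deq_cong[OF s01, of "[0,2]" "[2]"] by simp
  also have "Deq n [0,2,1,0,2] [1,1,0,2,1,0,2]"
    using Deq_cong[OF Deq.Deq_sym[OF Deq_letter_square[of 1 n]], of "[]" "[0,2,1,0,2]"] assms by simp
  finally show ?thesis .
qed


lemma Deq_w_word_square: assumes "1 \<le> k" "k < n" shows "Deq n (w_word k @ w_word k) []"
proof -
  let ?v = "[2..<k+1]"
  have sv: "set ?v \<subseteq> {..<n}" using assms by auto
  have "w_word k @ w_word k = rev ?v @ [1,0] @ (?v @ rev ?v) @ [1,0] @ ?v"
    using w_word_conv[OF assms(1)] by simp
  also have "Deq n (rev ?v @ [1,0] @ (?v @ rev ?v) @ [1,0] @ ?v) (rev ?v @ [1,0] @ [] @ [1,0] @ ?v)"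
    by (rule Deq_append_left, rule Deq_append_left, rule Deq_append_right, rule Deq_append_rev[OF sv])
  also have "rev ?v @ [1,0] @ [] @ [1,0] @ ?v = rev ?v @ ([1,0] @ [1,0]) @ ?v" by simp
  also have "Deq n (rev ?v @ ([1,0] @ [1,0]) @ ?v) (rev ?v @ [] @ ?v)"
    by (rule Deq_cong, rule Deq_w1_square) (use assms in auto)
  also have "Deq n (rev ?v @ [] @ ?v) []" using Deq_rev_append[OF sv] by simp
  finally show ?thesis .
qed

lemma Deq_rev_w_word: assumes "1 \<le> k" "k < n" shows "Deq n (rev (w_word k)) (w_word k)"
proof -
  let ?v = "[2..<k+1]"
  have "rev (w_word k) = rev ?v @ [0,1] @ ?v" using w_word_conv[OF assms(1)] by simp
  also have "Deq n (rev ?v @ [0,1] @ ?v) (rev ?v @ [1,0] @ ?v)"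
    by (rule Deq_cong, rule Deq_commute_0_1) (use assms in auto)
  also have "rev ?v @ [1,0] @ ?v = w_word k" using w_word_conv[OF assms(1)] by simp
  finally show ?thesis .
qed

lemma Deq_w1_w_word_commute:
  assumes "1 \<le> j" "j < n" shows "Deq n ([1,0] @ w_word j) (w_word j @ [1,0])"
proof (cases "j = 1")
  case True then show ?thesis by (simp add: Deq.Deq_refl)
next
  case False
  then have j2: "2 \<le> j" and n3: "3 \<le> n" using assms by auto
  let ?v = "[3..<j+1]"
  have commute: "Deq n ([1,0] @ ?v) (?v @ [1,0])"
    by (rule Deq_commute_words) (use assms in \<open>auto intro!: commuting_lettersI\<close>)
  have "[1,0] @ w_word j = ([1,0] @ rev ?v) @ w_word 2 @ ?v" using w_word_conv_w_word_2[OF j2] by simp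
  also have "Deq n (([1,0] @ rev ?v) @ w_word 2 @ ?v) ((rev ?v @ [1,0]) @ w_word 2 @ ?v)"
    by (rule Deq_append_right, rule Deq_commute_words) (use assms in \<open>auto intro!: commuting_lettersI\<close>)
  also have "(rev ?v @ [1,0]) @ w_word 2 @ ?v = rev ?v @ [1,0,2,1,0,2] @ ?v" by (simp add: w_word_2)
  also have "Deq n (rev ?v @ [1,0,2,1,0,2] @ ?v) (rev ?v @ [2,1,0,2,1,0] @ ?v)"
    by (rule Deq_cong, rule Deq_w1_w2_commute[OF n3])
  also have "rev ?v @ [2,1,0,2,1,0] @ ?v = rev ?v @ w_word 2 @ ([1,0] @ ?v)" by (simp add: w_word_2)
  also have "Deq n (rev ?v @ w_word 2 @ ([1,0] @ ?v)) (rev ?v @ w_word 2 @ (?v @ [1,0]))"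
    by (rule Deq_append_left, rule Deq_append_left, rule commute)
  also have "rev ?v @ w_word 2 @ (?v @ [1,0]) = w_word j @ [1,0]" using w_word_conv_w_word_2[OF j2] by simp
  finally show ?thesis .
qed

lemma Deq_w_word_letter_commute:
  assumes "2 \<le> i" "i + 1 \<le> k" "k < n" shows "Deq n (w_word k @ [i]) ([i] @ w_word k)"
proof -
  let ?v = "[2..<k+1]"
  have k1: "1 \<le> k" using assms by auto
  have sv: "set ?v \<subseteq> {..<n}" using assms by auto
  have sh: "Deq n (?v @ [i]) ([i+1] @ ?v)" by (rule Deq_cycle_conj_letter) (use assms in auto)
  have "w_word k @ [i] = rev ?v @ [1,0] @ (?v @ [i])" using w_word_conv[OF k1] by simp
  also have "Deq n (rev ?v @ [1,0] @ (?v @ [i])) (rev ?v @ [1,0] @ ([i+1] @ ?v))"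
    by (rule Deq_append_left, rule Deq_append_left, rule sh)
  also have "rev ?v @ [1,0] @ ([i+1] @ ?v) = rev ?v @ ([1,0] @ [i+1]) @ ?v" by simp
  also have "Deq n (rev ?v @ ([1,0] @ [i+1]) @ ?v) (rev ?v @ ([i+1] @ [1,0]) @ ?v)"
    by (rule Deq_cong, rule Deq_commute_words) (use assms in \<open>auto intro!: commuting_lettersI\<close>)
  also have "rev ?v @ ([i+1] @ [1,0]) @ ?v = (rev ?v @ [i+1]) @ [1,0] @ ?v" by simp
  also have "Deq n ((rev ?v @ [i+1]) @ [1,0] @ ?v) (([i] @ rev ?v) @ [1,0] @ ?v)"
    by (rule Deq_append_right, rule Deq_conj_rev[OF sh sv])
  also have "([i] @ rev ?v) @ [1,0] @ ?v = [i] @ w_word k" using w_word_conv[OF k1] by simp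
  finally show ?thesis .
qed

lemma Deq_w_word_s1:
  assumes "2 \<le> k" "k < n" shows "Deq n (w_word k @ [1]) ([1] @ [1,0] @ w_word k)"
proof -
  let ?v = "[3..<k+1]"
  have n3: "3 \<le> n" using assms by auto
  have "w_word k @ [1] = rev ?v @ w_word 2 @ (?v @ [1])" using w_word_conv_w_word_2[OF assms(1)] by simp
  also have "Deq n (rev ?v @ w_word 2 @ (?v @ [1])) (rev ?v @ w_word 2 @ ([1] @ ?v))"
    by (rule Deq_append_left, rule Deq_append_left, rule Deq_commute_words)
      (use assms in \<open>auto intro!: commuting_lettersI\<close>)
  also have "rev ?v @ w_word 2 @ ([1] @ ?v) = rev ?v @ [2,1,0,2,1] @ ?v" by (simp add: w_word_2)
  also have "Deq n (rev ?v @ [2,1,0,2,1] @ ?v) (rev ?v @ [1,1,0,2,1,0,2] @ ?v)"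
    by (rule Deq_cong, rule Deq_w2_s1[OF n3])
  also have "rev ?v @ [1,1,0,2,1,0,2] @ ?v = (rev ?v @ [1,1,0]) @ w_word 2 @ ?v" by (simp add: w_word_2)
  also have "Deq n ((rev ?v @ [1,1,0]) @ w_word 2 @ ?v) (([1,1,0] @ rev ?v) @ w_word 2 @ ?v)"
    by (rule Deq_append_right, rule Deq_commute_words) (use assms in \<open>auto intro!: commuting_lettersI\<close>)
  also have "([1,1,0] @ rev ?v) @ w_word 2 @ ?v = [1] @ [1,0] @ w_word k"
    using w_word_conv_w_word_2[OF assms(1)] by simp
  finally show ?thesis .
qed


lemma Deq_cycle_w_word_last:
  assumes "1 \<le> j" "j + 1 \<le> n" shows "Deq n ([1..<Suc j] @ w_word j) ([1,0] @ [1..<Suc j])"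
  using assms
proof (induction j rule: nat_induct_at_least)
  case base
  have "Deq n [1,1,0] [0]" using Deq_cong[OF Deq_letter_square[of 1 n], of "[]" "[0]"] base by simp
  also have "Deq n [0] [0,1,1]" using Deq_cong[OF Deq_letter_square[of 1 n], of "[0]" "[]"] base
    by (simp add: Deq.Deq_sym)
  also have "Deq n [0,1,1] [1,0,1]" using Deq_cong[OF Deq_commute_0_1[of n], of "[]" "[1]"] base by simp
  finally show ?case by simp
next
  case (Suc j)
  have "[1..<Suc (Suc j)] @ w_word (Suc j) = [1..<Suc j] @ [Suc j, Suc j] @ w_word j @ [Suc j]"
    using w_word_Suc[OF Suc.hyps] by simp
  also have "Deq n ([1..<Suc j] @ [Suc j, Suc j] @ w_word j @ [Suc j]) ([1..<Suc j] @ [] @ w_word j @ [Suc j])"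
    by (rule Deq_cong, rule Deq_letter_square) (use Suc.prems in auto)
  also have "[1..<Suc j] @ [] @ w_word j @ [Suc j] = ([1..<Suc j] @ w_word j) @ [Suc j]" by simp
  also have "Deq n (([1..<Suc j] @ w_word j) @ [Suc j]) (([1,0] @ [1..<Suc j]) @ [Suc j])"
    by (rule Deq_append_right, rule Suc.IH) (use Suc.prems in auto)
  finally show ?case by simp
qed

lemma Deq_cycle_w_word_extend:
  assumes "Deq n ([1..<j+2] @ w_word j) ([1,0] @ w_word (j+1) @ [1..<j+2])" "1 \<le> j" "j + 2 \<le> k" "k \<le> n"
  shows "Deq n ([1..<k] @ w_word j) ([1,0] @ w_word (j+1) @ [1..<k])"
proof -
  have split: "[1..<k] = [1..<j+2] @ [j+2..<k]"
  proof -
    obtain d where "k = (j + 2) + d" using assms(3) le_Suc_ex by blast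
    then show ?thesis using upt_add_eq_append[of 1 "j+2" d] by simp
  qed
  have "[1..<k] @ w_word j = [1..<j+2] @ ([j+2..<k] @ w_word j)" using split by simp
  also have "Deq n \<dots> ([1..<j+2] @ (w_word j @ [j+2..<k]))"
    by (rule Deq_append_left, rule Deq_commute_words)
      (use set_w_word[of j] assms in \<open>auto intro!: commuting_lettersI\<close>)
  also have "\<dots> = ([1..<j+2] @ w_word j) @ [j+2..<k]" by simp
  also have "Deq n \<dots> (([1,0] @ w_word (j+1) @ [1..<j+2]) @ [j+2..<k])"
    by (rule Deq_append_right, rule assms(1))
  also have "\<dots> = [1,0] @ w_word (j+1) @ [1..<k]" using split by simp
  finally show ?thesis .
qed

lemma Deq_cycle_w_word_adjacent:
  assumes "1 \<le> j" "j + 2 \<le> n"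
  shows "Deq n ([1..<j+2] @ w_word j) ([1,0] @ w_word (j+1) @ [1..<j+2])"
  using assms
proof (induction j rule: nat_induct_at_least)
  case base
  have "[1..<1+2] @ w_word 1 = [1,2,1,0]" by (simp add: upt_rec)
  also have "Deq n [1,2,1,0] [1,0,2,1,0,2,1,2]" by (rule Deq_t3_w1) (use base in auto)
  also have "[1,0,2,1,0,2,1,2] = [1,0] @ w_word 2 @ [1..<1+2]" by (simp add: w_word_2 upt_rec)
  finally show ?case by (simp add: numeral_2_eq_2)
next
  case (Suc j)
  let ?c = "[1..<Suc j + 2]"
  have sh: "Deq n (?c @ [Suc j]) ([Suc j + 1] @ ?c)"
    by (rule Deq_cycle_conj_letter) (use Suc.prems Suc.hyps in auto)
  have "?c @ w_word (Suc j) = (?c @ [Suc j]) @ w_word j @ [Suc j]" using w_word_Suc[OF Suc.hyps] by simp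
  also have "Deq n \<dots> (([Suc j + 1] @ ?c) @ w_word j @ [Suc j])"
    by (rule Deq_append_right, rule sh)
  also have "\<dots> = [Suc j + 1] @ (?c @ w_word j) @ [Suc j]" by simp
  also have "Deq n \<dots> ([Suc j + 1] @ ([1,0] @ w_word (j+1) @ ?c) @ [Suc j])"
    by (rule Deq_cong, rule Deq_cycle_w_word_extend[OF Suc.IH]) (use Suc.prems Suc.hyps in auto)
  also have "\<dots> = ([Suc j + 1] @ [1,0]) @ w_word (j+1) @ (?c @ [Suc j])" by simp
  also have "Deq n \<dots> (([Suc j + 1] @ [1,0]) @ w_word (j+1) @ ([Suc j + 1] @ ?c))"
    by (rule Deq_append_left, rule Deq_append_left, rule sh)
  also have "Deq n \<dots> (([1,0] @ [Suc j + 1]) @ (w_word (j+1) @ [Suc j + 1] @ ?c))"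
    by (rule Deq_append_right, rule Deq_commute_words)
      (use Suc.prems Suc.hyps in \<open>auto intro!: commuting_lettersI\<close>)
  also have "\<dots> = [1,0] @ w_word (Suc j + 1) @ ?c"
    using w_word_Suc[of "Suc j"] by simp
  finally show ?case .
qed

lemma Deq_cycle_w_word:
  "1 \<le> j \<Longrightarrow> j + 2 \<le> k \<Longrightarrow> k \<le> n \<Longrightarrow> Deq n ([1..<k] @ w_word j) ([1,0] @ w_word (j+1) @ [1..<k])"
  by (rule Deq_cycle_w_word_extend[OF Deq_cycle_w_word_adjacent]) auto

text \<open>In the permutation representation below, \<open>flip_word p\<close> negates \<open>1\<close> and \<open>p\<close> (and is
  trivial for \<open>p = 1\<close>). Conjugation by the cycle \<open>[1..<k]\<close> moves it to \<open>flip_word (cycle_succ k p)\<close>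
  at the cost of a factor \<open>w\<^sub>1 = [1, 0]\<close>, which cancels when two flips are moved together.\<close>

definition flip_word :: "nat \<Rightarrow> nat list" where
  "flip_word p = (if p \<le> 1 then [] else w_word (p - 1))"

definition cycle_succ :: "nat \<Rightarrow> nat \<Rightarrow> nat" where
  "cycle_succ k p = (if p < k then p + 1 else 1)"

lemma funpow_cycle_succ_range:
  "1 \<le> p \<Longrightarrow> p \<le> k \<Longrightarrow> 1 \<le> (cycle_succ k ^^ a) p \<and> (cycle_succ k ^^ a) p \<le> k"
  by (induction a) (auto simp: cycle_succ_def)

lemma Deq_w1_flip_word_commute:
  assumes "p \<le> n" shows "Deq n ([1,0] @ flip_word p) (flip_word p @ [1,0])"
  using Deq_w1_w_word_commute[of "p - 1" n] assms by (simp add: flip_word_def Deq.Deq_refl)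

lemma Deq_cycle_flip_word:
  assumes "2 \<le> k" "k < n" "1 \<le> p" "p \<le> k"
  shows "Deq n ([1..<k] @ flip_word p) ([1,0] @ flip_word (cycle_succ k p) @ [1..<k])"
proof -
  consider "p = 1" | "2 \<le> p \<and> p < k" | "p = k" using assms by linarith
  then show ?thesis
  proof cases
    case 1
    have "Deq n [1..<k] ([1,0] @ [1,0] @ [1..<k])"
      using Deq_append_right[OF Deq_w1_square[of n], of "[1..<k]"] assms by (simp add: Deq.Deq_sym)
    then show ?thesis using 1 assms by (simp add: flip_word_def cycle_succ_def)
  next
    case 2
    have "Deq n ([1..<k] @ w_word (p - 1)) ([1,0] @ w_word (p - 1 + 1) @ [1..<k])"
      by (rule Deq_cycle_w_word) (use 2 assms in auto)
    then show ?thesis using 2 by (simp add: flip_word_def cycle_succ_def)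
  next
    case 3
    have "Deq n ([1..<Suc (k - 1)] @ w_word (k - 1)) ([1,0] @ [1..<Suc (k - 1)])"
      by (rule Deq_cycle_w_word_last) (use assms in auto)
    then show ?thesis using 3 assms by (simp add: flip_word_def cycle_succ_def)
  qed
qed

lemma Deq_cycle_pow_flip_words:
  assumes "2 \<le> k" "k < n" "1 \<le> p" "p \<le> k" "1 \<le> q" "q \<le> k"
  shows "Deq n (word_pow [1..<k] a @ flip_word p @ flip_word q)
    (flip_word ((cycle_succ k ^^ a) p) @ flip_word ((cycle_succ k ^^ a) q) @ word_pow [1..<k] a)"
proof (induction a)
  case 0 then show ?case by (simp add: Deq.Deq_refl)
next
  case (Suc a)
  let ?c = "[1..<k]" and ?p = "(cycle_succ k ^^ a) p" and ?q = "(cycle_succ k ^^ a) q"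
  let ?fp = "flip_word (cycle_succ k ?p)" and ?fq = "flip_word (cycle_succ k ?q)"
  have p: "1 \<le> ?p" "?p \<le> k" and q: "1 \<le> ?q" "?q \<le> k"
    using funpow_cycle_succ_range assms by auto
  have "word_pow ?c (Suc a) @ flip_word p @ flip_word q = ?c @ (word_pow ?c a @ flip_word p @ flip_word q)"
    by (simp add: word_pow_Suc)
  also have "Deq n \<dots> (?c @ (flip_word ?p @ flip_word ?q @ word_pow ?c a))"
    by (rule Deq_append_left, rule Suc.IH)
  also have "\<dots> = (?c @ flip_word ?p) @ flip_word ?q @ word_pow ?c a" by simp
  also have "Deq n \<dots> (([1,0] @ ?fp @ ?c) @ flip_word ?q @ word_pow ?c a)"
    by (rule Deq_append_right, rule Deq_cycle_flip_word) (use assms p in auto)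
  also have "\<dots> = ([1,0] @ ?fp) @ (?c @ flip_word ?q) @ word_pow ?c a" by simp
  also have "Deq n \<dots> (([1,0] @ ?fp) @ ([1,0] @ ?fq @ ?c) @ word_pow ?c a)"
    by (rule Deq_cong, rule Deq_cycle_flip_word) (use assms q in auto)
  also have "\<dots> = [1,0] @ (?fp @ [1,0]) @ ?fq @ (?c @ word_pow ?c a)" by simp
  also have "Deq n \<dots> ([1,0] @ ([1,0] @ ?fp) @ ?fq @ (?c @ word_pow ?c a))"
    by (rule Deq_cong, rule Deq.Deq_sym, rule Deq_w1_flip_word_commute)
      (use assms p q in \<open>auto simp: cycle_succ_def\<close>)
  also have "\<dots> = ([1,0] @ [1,0]) @ ?fp @ ?fq @ (?c @ word_pow ?c a)" by simp
  also have "Deq n \<dots> ([] @ ?fp @ ?fq @ (?c @ word_pow ?c a))"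
    by (rule Deq_append_right, rule Deq_w1_square) (use assms in auto)
  finally show ?case by (simp add: word_pow_Suc)
qed

definition normal_words :: "nat \<Rightarrow> nat list set" where
  "normal_words k = {normal_word k j i | j i. (\<forall>k'\<in>{1..k}. j k' \<le> 1) \<and> (\<forall>k'\<in>{2..k}. i k' \<le> k' - 1)}"

lemma H_set_eq_image: "H_set n m = Dclass n ` normal_words m"
  unfolding H_set_def normal_words_def by blast

lemma normal_word_0: "normal_word 0 j i = []"
  by (simp add: normal_word_def)

text \<open>Since \<open>t\<^sub>1\<close> is empty, the guard \<open>2 \<le> k\<close> in \<open>normal_word\<close> can be dropped.\<close>
lemma normal_word_Suc:
  "normal_word (Suc k) j i = normal_word k j i @ word_pow (t_word (Suc k)) (i (Suc k)) @ word_pow (w_word (Suc k)) (j (Suc k))"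
  by (cases k) (simp_all add: normal_word_def t_word_def word_pow_def)

lemma normal_word_cong:
  "(\<And>k'. 1 \<le> k' \<Longrightarrow> k' \<le> k \<Longrightarrow> j k' = j' k' \<and> i k' = i' k') \<Longrightarrow> normal_word k j i = normal_word k j' i'"
  unfolding normal_word_def by (intro arg_cong[where f = concat] map_cong) auto

lemma normal_words_0: "normal_words 0 = {[]}"
  by (auto simp: normal_words_def normal_word_0)

lemma normal_words_Suc: "normal_words (Suc k) =
  {x @ word_pow (t_word (Suc k)) a @ word_pow (w_word (Suc k)) b | x a b. x \<in> normal_words k \<and> a \<le> k \<and> b \<le> 1}"
proof (intro equalityI subsetI)
  fix u assume "u \<in> normal_words (Suc k)"
  then obtain j i where u: "u = normal_word (Suc k) j i"
    and j: "\<forall>k'\<in>{1..Suc k}. j k' \<le> 1" and i: "\<forall>k'\<in>{2..Suc k}. i k' \<le> k' - 1"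
    unfolding normal_words_def by blast
  define a where "a = (if k = 0 then 0 else i (Suc k))"
  have "word_pow (t_word (Suc k)) (i (Suc k)) = word_pow (t_word (Suc k)) a"
    by (simp add: a_def t_word_def)
  moreover have "a \<le> k" using i[rule_format, of "Suc k"] by (auto simp: a_def)
  moreover have "normal_word k j i \<in> normal_words k" unfolding normal_words_def using i j by force
  ultimately show "u \<in> {x @ word_pow (t_word (Suc k)) a @ word_pow (w_word (Suc k)) b | x a b.
      x \<in> normal_words k \<and> a \<le> k \<and> b \<le> 1}"
    using u j normal_word_Suc[of k j i] by fastforce
next
  fix u assume "u \<in> {x @ word_pow (t_word (Suc k)) a @ word_pow (w_word (Suc k)) b | x a b.
      x \<in> normal_words k \<and> a \<le> k \<and> b \<le> 1}"
  then obtain x a b where u: "u = x @ word_pow (t_word (Suc k)) a @ word_pow (w_word (Suc k)) b"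
    and x: "x \<in> normal_words k" and ab: "a \<le> k" "b \<le> 1"
    by blast
  obtain j i where x_eq: "x = normal_word k j i"
    and j: "\<forall>k'\<in>{1..k}. j k' \<le> 1" and i: "\<forall>k'\<in>{2..k}. i k' \<le> k' - 1"
    using x unfolding normal_words_def by blast
  have "normal_word k (j(Suc k := b)) (i(Suc k := a)) = normal_word k j i"
    by (rule normal_word_cong) auto
  then have "u = normal_word (Suc k) (j(Suc k := b)) (i(Suc k := a))"
    using u x_eq normal_word_Suc[of k "j(Suc k := b)" "i(Suc k := a)"] by simp
  moreover have "\<forall>k'\<in>{1..Suc k}. (j(Suc k := b)) k' \<le> 1" "\<forall>k'\<in>{2..Suc k}. (i(Suc k := a)) k' \<le> k' - 1"
    using i j ab by (auto simp: le_Suc_eq)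
  ultimately show "u \<in> normal_words (Suc k)" unfolding normal_words_def by blast
qed

lemma normal_words_SucI:
  "x \<in> normal_words k \<Longrightarrow> a \<le> k \<Longrightarrow> b \<le> 1 \<Longrightarrow>
    x @ word_pow (t_word (Suc k)) a @ word_pow (w_word (Suc k)) b \<in> normal_words (Suc k)"
  unfolding normal_words_Suc by blast

lemma normal_words_SucE:
  assumes "u \<in> normal_words (Suc k)"
  obtains x a b where "u = x @ word_pow (t_word (Suc k)) a @ word_pow (w_word (Suc k)) b"
    "x \<in> normal_words k" "a \<le> k" "b \<le> 1"
  using assms unfolding normal_words_Suc by blast

lemma Nil_in_normal_words: "[] \<in> normal_words k"
  by (induction k) (use normal_words_SucI[of "[]" _ 0 0] in \<open>auto simp: normal_words_0\<close>)

lemma normal_words_mono: "x \<in> normal_words k \<Longrightarrow> k \<le> l \<Longrightarrow> x \<in> normal_words l"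
proof (induction l)
  case (Suc l) then show ?case using normal_words_SucI[of x l 0 0] by (auto simp: le_Suc_eq)
qed simp

lemma t_word_in_normal_words: "j \<le> k \<Longrightarrow> t_word j \<in> normal_words k"
proof (cases j)
  case (Suc j0)
  moreover assume "j \<le> k"
  moreover have "[] @ word_pow (t_word (Suc j0)) (min j0 1) @ word_pow (w_word (Suc j0)) 0 \<in> normal_words (Suc j0)"
    by (rule normal_words_SucI) (use Nil_in_normal_words in auto)
  ultimately show ?thesis by (cases j0) (auto simp: t_word_def intro: normal_words_mono)
qed (simp add: t_word_def Nil_in_normal_words)

lemma w_word_in_normal_words: "1 \<le> j \<Longrightarrow> j \<le> k \<Longrightarrow> w_word j \<in> normal_words k"
proof -
  assume "1 \<le> j" "j \<le> k"
  moreover from \<open>1 \<le> j\<close> obtain j0 where "j = Suc j0" by (cases j) auto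
  moreover have "[] @ word_pow (t_word (Suc j0)) 0 @ word_pow (w_word (Suc j0)) 1 \<in> normal_words (Suc j0)"
    by (rule normal_words_SucI) (use Nil_in_normal_words in auto)
  ultimately show ?thesis by (auto intro: normal_words_mono)
qed

lemma set_normal_words: "x \<in> normal_words k \<Longrightarrow> set x \<subseteq> {..k}"
proof (induction k arbitrary: x)
  case 0 then show ?case by (simp add: normal_words_0)
next
  case (Suc k)
  then obtain y a b where x: "x = y @ word_pow (t_word (Suc k)) a @ word_pow (w_word (Suc k)) b"
    and y: "y \<in> normal_words k" by (auto elim: normal_words_SucE)
  show ?case using Suc.IH[OF y] set_word_pow[of "t_word (Suc k)" a] set_word_pow[of "w_word (Suc k)" b]
    set_t_word[of "Suc k"] set_w_word[of "Suc k"] unfolding x by auto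
qed

section \<open>Closure of the normal forms\<close>

definition concats :: "'a list set \<Rightarrow> 'a list set" where
  "concats Y = {concat ys | ys. set ys \<subseteq> Y}"

lemma Nil_in_concats: "[] \<in> concats Y"
  unfolding concats_def by (rule CollectI, rule exI[of _ "[]"]) simp

lemma concats_single: "y \<in> Y \<Longrightarrow> y \<in> concats Y"
  unfolding concats_def by (rule CollectI, rule exI[of _ "[y]"]) simp

lemma append_in_concats: "u \<in> concats Y \<Longrightarrow> v \<in> concats Y \<Longrightarrow> u @ v \<in> concats Y"
proof -
  assume "u \<in> concats Y" "v \<in> concats Y"
  then obtain us vs where "set us \<subseteq> Y" "u = concat us" "set vs \<subseteq> Y" "v = concat vs"
    unfolding concats_def by blast
  then show ?thesis unfolding concats_def by (intro CollectI exI[of _ "us @ vs"]) simp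
qed

lemma word_pow_in_concats: "u \<in> concats Y \<Longrightarrow> word_pow u j \<in> concats Y"
  by (induction j) (auto simp: word_pow_Suc Nil_in_concats append_in_concats)

lemma letters_in_concats: "(\<And>i. i \<in> set u \<Longrightarrow> [i] \<in> Y) \<Longrightarrow> u \<in> concats Y"
proof (induction u)
  case Nil then show ?case by (simp add: Nil_in_concats)
next
  case (Cons a u) then show ?case using append_in_concats[of "[a]" Y u] concats_single[of "[a]" Y] by simp
qed

lemma t_word_in_concats: "(\<And>i. 1 \<le> i \<Longrightarrow> i < j \<Longrightarrow> [i] \<in> Y) \<Longrightarrow> t_word j \<in> concats Y"
  by (rule letters_in_concats) (auto simp: set_t_word)

lemma w_word_in_concats:
  assumes "1 \<le> j" "[1, 0] \<in> Y" "\<And>i. 2 \<le> i \<Longrightarrow> i \<le> j \<Longrightarrow> [i] \<in> Y"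
  shows "w_word j \<in> concats Y"
  unfolding w_word_conv[OF assms(1)] using assms
  by (intro append_in_concats letters_in_concats concats_single) auto

lemma normal_words_in_concats:
  assumes "\<And>j. 1 \<le> j \<Longrightarrow> j \<le> k \<Longrightarrow> t_word j \<in> concats Y \<and> w_word j \<in> concats Y"
  shows "x \<in> normal_words k \<Longrightarrow> x \<in> concats Y"
  using assms
proof (induction k arbitrary: x)
  case 0 then show ?case by (simp add: normal_words_0 Nil_in_concats)
next
  case (Suc k)
  then obtain y a b where x: "x = y @ word_pow (t_word (Suc k)) a @ word_pow (w_word (Suc k)) b"
    and y: "y \<in> normal_words k" by (auto elim: normal_words_SucE)
  have "y \<in> concats Y" using Suc.IH[OF y] Suc.prems by auto
  moreover have "t_word (Suc k) \<in> concats Y" "w_word (Suc k) \<in> concats Y" using Suc.prems(2)[of "Suc k"] by auto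
  ultimately show ?case unfolding x by (simp add: append_in_concats word_pow_in_concats)
qed


definition coset_words :: "nat \<Rightarrow> (nat list \<Rightarrow> bool) \<Rightarrow> nat list set \<Rightarrow> nat list \<Rightarrow> bool" where
  "coset_words n K T u \<longleftrightarrow> (\<exists>x \<tau>. K x \<and> \<tau> \<in> T \<and> Deq n u (x @ \<tau>))"

lemma coset_wordsI: "Deq n u (x @ \<tau>) \<Longrightarrow> K x \<Longrightarrow> \<tau> \<in> T \<Longrightarrow> coset_words n K T u"
  unfolding coset_words_def by blast

lemma coset_words_Deq: "Deq n u v \<Longrightarrow> coset_words n K T v \<Longrightarrow> coset_words n K T u"
  unfolding coset_words_def by (blast intro: Deq.Deq_trans)

text \<open>Since \<open>T Y \<subseteq> K T\<close>, the product \<open>K T\<close> is closed under right multiplication by the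
  generators in \<open>Y\<close>, hence by its own elements.\<close>
lemma coset_words_append:
  assumes K_append: "\<And>x y. K x \<Longrightarrow> K y \<Longrightarrow> K (x @ y)"
    and step: "\<And>\<tau> y. \<tau> \<in> T \<Longrightarrow> y \<in> Y \<Longrightarrow> coset_words n K T (\<tau> @ y)"
    and generated: "\<And>u. coset_words n K T u \<Longrightarrow> \<exists>v\<in>concats Y. Deq n u v"
    and u: "coset_words n K T u" and v: "coset_words n K T v"
  shows "coset_words n K T (u @ v)"
proof -
  have append_Y: "coset_words n K T (u @ y)" if u: "coset_words n K T u" and y: "y \<in> Y" for u y
  proof -
    obtain x \<tau> where x: "K x" "\<tau> \<in> T" "Deq n u (x @ \<tau>)" using u unfolding coset_words_def by blast
    obtain x' \<tau>' where x': "K x'" "\<tau>' \<in> T" "Deq n (\<tau> @ y) (x' @ \<tau>')"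
      using step[OF x(2) y] unfolding coset_words_def by blast
    have "Deq n (u @ y) (x @ (\<tau> @ y))" using Deq_append_right[OF x(3)] by simp
    also have "Deq n \<dots> (x @ (x' @ \<tau>'))" by (rule Deq_append_left[OF x'(3)])
    finally show ?thesis using K_append[OF x(1) x'(1)] x'(2) by (intro coset_wordsI[of _ _ "x @ x'"]) simp_all
  qed
  have "coset_words n K T (u @ concat ys)" if "coset_words n K T u" "set ys \<subseteq> Y" for u ys
    using that by (induction ys arbitrary: u) (use append_Y in \<open>fastforce+\<close>)
  moreover obtain ys where "set ys \<subseteq> Y" "Deq n v (concat ys)"
    using generated[OF v] unfolding concats_def by blast
  ultimately show ?thesis using u Deq_append_left coset_words_Deq by metis
qed

lemma coset_words_rev:
  assumes K_append: "\<And>x y. K x \<Longrightarrow> K y \<Longrightarrow> K (x @ y)"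
    and step: "\<And>\<tau> y. \<tau> \<in> T \<Longrightarrow> y \<in> Y \<Longrightarrow> coset_words n K T (\<tau> @ y)"
    and generated: "\<And>u. coset_words n K T u \<Longrightarrow> \<exists>v\<in>concats Y. Deq n u v"
    and rev_Y: "\<And>y. y \<in> Y \<Longrightarrow> coset_words n K T (rev y)"
    and Nil_in: "coset_words n K T []"
    and u: "coset_words n K T u"
  shows "coset_words n K T (rev u)"
proof -
  have rev_concat: "coset_words n K T (rev (concat ys))" if "set ys \<subseteq> Y" for ys
    using that
  proof (induction ys)
    case Nil then show ?case using Nil_in by simp
  next
    case (Cons y ys)
    then show ?case
      using coset_words_append[OF K_append step generated, of "rev (concat ys)" "rev y"] rev_Y by simp
  qed
  obtain ys where "set ys \<subseteq> Y" "Deq n u (concat ys)"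
    using generated[OF u] unfolding concats_def by blast
  then show ?thesis using rev_concat Deq_rev coset_words_Deq by metis
qed


lemma Deq_cycle_pow_letter_last:
  assumes "1 \<le> i" "i + a = k" "Suc k \<le> n"
  shows "Deq n (word_pow [1..<Suc k] a @ [i]) (rev (t_word k) @ word_pow [1..<Suc k] (Suc a))"
proof -
  let ?c = "[1..<Suc k]"
  have st: "set (t_word k) \<subseteq> {..<n}" using assms by (auto simp: set_t_word)
  have "Deq n (word_pow ?c a @ [i]) ([] @ [k] @ word_pow ?c a)"
    using Deq_cycle_pow_conj_letter[of 1 i a "Suc k" n] assms by simp
  also have "Deq n \<dots> ((rev (t_word k) @ t_word k) @ [k] @ word_pow ?c a)"
    by (rule Deq_append_right, rule Deq.Deq_sym, rule Deq_rev_append[OF st])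
  also have "\<dots> = rev (t_word k) @ word_pow ?c (Suc a)"
    using assms by (simp add: t_word_def word_pow_Suc)
  finally show ?thesis .
qed

lemma Deq_cycle_pow_letter_wrap:
  assumes "1 \<le> i" "i + a = Suc k" "i + 1 \<le> k" "Suc k \<le> n"
  shows "Deq n (word_pow [1..<Suc k] a @ [i]) (t_word k @ word_pow [1..<Suc k] (a - 1))"
proof -
  let ?c = "[1..<Suc k]"
  obtain a0 where a0: "a = Suc a0" using assms by (cases a) auto
  have "word_pow ?c a @ [i] = ?c @ (word_pow ?c a0 @ [i])" using a0 by (simp add: word_pow_Suc)
  also have "Deq n \<dots> (?c @ ([i + a0] @ word_pow ?c a0))"
    by (rule Deq_append_left, rule Deq_cycle_pow_conj_letter) (use assms a0 in auto)
  also have "\<dots> = t_word k @ [k, k] @ word_pow ?c a0"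
    using assms a0 by (simp add: t_word_def)
  also have "Deq n \<dots> (t_word k @ [] @ word_pow ?c a0)"
    by (rule Deq_cong, rule Deq_letter_square) (use assms in auto)
  finally show ?thesis using a0 by simp
qed

lemma Deq_cycle_pow_letter_overflow:
  assumes "1 \<le> i" "Suc k < i + a" "a \<le> k" "i + 1 \<le> k" "Suc k \<le> n"
  shows "Deq n (word_pow [1..<Suc k] a @ [i]) ([i + a - Suc k] @ word_pow [1..<Suc k] a)"
proof -
  let ?c = "[1..<Suc k]"
  define a' where "a' = Suc k - a"
  define r where "r = i + a - Suc k"
  have a': "a' + a = Suc k" and r: "r + a' = i" using assms by (auto simp: a'_def r_def)
  have order: "Deq n (word_pow ?c (a' + a)) []" unfolding a' by (rule Deq_cycle_order) (use assms in auto)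
  have "Deq n (word_pow ?c a @ [i]) (word_pow ?c a @ [i] @ word_pow ?c (a' + a))"
    using Deq_append_left[OF order, of "word_pow ?c a @ [i]"] by (simp add: Deq.Deq_sym)
  also have "\<dots> = word_pow ?c a @ ([r + a'] @ word_pow ?c a') @ word_pow ?c a"
    by (simp add: r word_pow_add)
  also have "Deq n \<dots> (word_pow ?c a @ (word_pow ?c a' @ [r]) @ word_pow ?c a)"
    by (rule Deq_cong, rule Deq.Deq_sym, rule Deq_cycle_pow_conj_letter) (use assms a' r in auto)
  also have "\<dots> = word_pow ?c (a + a') @ [r] @ word_pow ?c a" by (simp add: word_pow_add)
  also have "Deq n \<dots> ([] @ [r] @ word_pow ?c a)"
    by (rule Deq_append_right) (use order in \<open>simp add: add.commute\<close>)
  finally show ?thesis by (simp add: r_def)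
qed

definition in_H :: "nat \<Rightarrow> nat \<Rightarrow> nat list \<Rightarrow> bool" where
  "in_H n k u \<longleftrightarrow> (\<exists>x\<in>normal_words k. Deq n u x)"

lemma in_H_normal_word: "x \<in> normal_words k \<Longrightarrow> in_H n k x"
  unfolding in_H_def by (blast intro: Deq.Deq_refl)

lemma in_H_Deq: "Deq n u v \<Longrightarrow> in_H n k v \<Longrightarrow> in_H n k u"
  unfolding in_H_def by (blast intro: Deq.Deq_trans)

definition cycle_powers :: "nat \<Rightarrow> nat list set" where
  "cycle_powers k = {word_pow (t_word (Suc k)) a | a. a \<le> k}"

lemma cycle_powersI: "a \<le> k \<Longrightarrow> word_pow [1..<Suc k] a \<in> cycle_powers k"
  unfolding cycle_powers_def t_word_def by blast

lemma cycle_powersE: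
  assumes "\<tau> \<in> cycle_powers k" obtains a where "\<tau> = word_pow [1..<Suc k] a" "a \<le> k"
  using assms unfolding cycle_powers_def t_word_def by blast

definition cycle_generators :: "nat \<Rightarrow> nat list set" where
  "cycle_generators k =
    {[i] | i. 1 \<le> i \<and> i + 1 \<le> k} \<union> {[1..<Suc k]} \<union> (if 1 \<le> k then {[1, 0], w_word k} else {})"

text \<open>The induction step from \<open>H\<^sub>k\<close> to \<open>H\<^sub>k\<^sub>+\<^sub>1 = H\<^sub>k \<langle>t\<^sub>k\<^sub>+\<^sub>1\<rangle> {1, w\<^sub>k\<^sub>+\<^sub>1}\<close>: closure is shown
  first for \<open>H\<^sub>k \<langle>t\<^sub>k\<^sub>+\<^sub>1\<rangle>\<close>, then for \<open>H\<^sub>k\<^sub>+\<^sub>1\<close>.\<close>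

locale H_level =
  fixes n k :: nat
  assumes level_bound: "Suc k < n"
    and in_H_append: "in_H n k u \<Longrightarrow> in_H n k v \<Longrightarrow> in_H n k (u @ v)"
    and in_H_rev: "in_H n k u \<Longrightarrow> in_H n k (rev u)"
begin

abbreviation in_H_cycle :: "nat list \<Rightarrow> bool" where
  "in_H_cycle \<equiv> coset_words n (in_H n k) (cycle_powers k)"

lemma in_H_letter: assumes "1 \<le> i" "i + 1 \<le> k" shows "in_H n k [i]"
proof (rule in_H_Deq[OF Deq_letter_t_words])
  show "in_H n k (rev (t_word i) @ t_word (Suc i))"
    using assms by (intro in_H_append in_H_rev in_H_normal_word t_word_in_normal_words) auto
qed (use assms level_bound in auto)

lemma in_H_cycle_append_cycle:
  assumes "\<tau> \<in> cycle_powers k" shows "in_H_cycle (\<tau> @ [1..<Suc k])"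
proof -
  obtain a where a: "\<tau> = word_pow [1..<Suc k] a" "a \<le> k" using assms(1) by (rule cycle_powersE)
  have Nil: "in_H n k []" by (rule in_H_normal_word[OF Nil_in_normal_words])
  show ?thesis
  proof (cases "a < k")
    case True
    then show ?thesis using Nil cycle_powersI[of "Suc a" k]
      by (intro coset_wordsI[of _ _ "[]" "word_pow [1..<Suc k] (Suc a)"]) (auto simp: a word_pow_Suc' Deq.Deq_refl)
  next
    case False
    then have "Deq n (\<tau> @ [1..<Suc k]) ([] @ word_pow [1..<Suc k] 0)"
      using a Deq_cycle_order[of 1 k "Suc k" n] level_bound by (simp add: word_pow_Suc')
    then show ?thesis using Nil cycle_powersI[of 0 k] by (intro coset_wordsI[of _ _ "[]" "[]"]) simp_all
  qed
qed

lemma in_H_cycle_append_letter: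
  assumes "\<tau> \<in> cycle_powers k" "1 \<le> i" "i + 1 \<le> k" shows "in_H_cycle (\<tau> @ [i])"
proof -
  obtain a where a: "\<tau> = word_pow [1..<Suc k] a" "a \<le> k" using assms(1) by (rule cycle_powersE)
  consider "i + a < k" | "i + a = k" | "i + a = Suc k" | "Suc k < i + a" by linarith
  then show ?thesis
  proof cases
    case 1
    have "Deq n (\<tau> @ [i]) ([i + a] @ word_pow [1..<Suc k] a)"
      unfolding a by (rule Deq_cycle_pow_conj_letter) (use 1 assms level_bound in auto)
    moreover have "in_H n k [i + a]" by (rule in_H_letter) (use 1 assms in auto)
    ultimately show ?thesis using cycle_powersI[OF a(2)] by (rule coset_wordsI)
  next
    case 2
    have "Deq n (\<tau> @ [i]) (rev (t_word k) @ word_pow [1..<Suc k] (Suc a))"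
      unfolding a by (rule Deq_cycle_pow_letter_last) (use 2 assms level_bound in auto)
    moreover have "in_H n k (rev (t_word k))"
      by (intro in_H_rev in_H_normal_word t_word_in_normal_words) simp
    moreover have "word_pow [1..<Suc k] (Suc a) \<in> cycle_powers k" using 2 assms by (intro cycle_powersI) auto
    ultimately show ?thesis by (rule coset_wordsI)
  next
    case 3
    have "Deq n (\<tau> @ [i]) (t_word k @ word_pow [1..<Suc k] (a - 1))"
      unfolding a by (rule Deq_cycle_pow_letter_wrap) (use 3 assms level_bound in auto)
    moreover have "in_H n k (t_word k)" by (intro in_H_normal_word t_word_in_normal_words) simp
    moreover have "word_pow [1..<Suc k] (a - 1) \<in> cycle_powers k" using a by (intro cycle_powersI) auto
    ultimately show ?thesis by (rule coset_wordsI)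
  next
    case 4
    have "Deq n (\<tau> @ [i]) ([i + a - Suc k] @ word_pow [1..<Suc k] a)"
      unfolding a by (rule Deq_cycle_pow_letter_overflow) (use 4 assms a level_bound in auto)
    moreover have "in_H n k [i + a - Suc k]" by (rule in_H_letter) (use 4 assms a in auto)
    ultimately show ?thesis using cycle_powersI[OF a(2)] by (rule coset_wordsI)
  qed
qed

lemma in_H_flip_word: "1 \<le> p \<Longrightarrow> p \<le> Suc k \<Longrightarrow> in_H n k (flip_word p)"
  by (auto simp: flip_word_def intro!: in_H_normal_word w_word_in_normal_words Nil_in_normal_words)

lemma in_H_cycle_append_flip_words:
  assumes "\<tau> \<in> cycle_powers k" "1 \<le> k" "1 \<le> p" "p \<le> Suc k" "1 \<le> q" "q \<le> Suc k"
  shows "in_H_cycle (\<tau> @ flip_word p @ flip_word q)"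
proof -
  obtain a where a: "\<tau> = word_pow [1..<Suc k] a" "a \<le> k" using assms(1) by (rule cycle_powersE)
  let ?p = "(cycle_succ (Suc k) ^^ a) p" and ?q = "(cycle_succ (Suc k) ^^ a) q"
  have "Deq n (\<tau> @ flip_word p @ flip_word q) (flip_word ?p @ flip_word ?q @ \<tau>)"
    unfolding a by (rule Deq_cycle_pow_flip_words) (use assms level_bound in auto)
  moreover have "in_H n k (flip_word ?p @ flip_word ?q)"
    using funpow_cycle_succ_range[of p "Suc k" a] funpow_cycle_succ_range[of q "Suc k" a] assms
    by (intro in_H_append in_H_flip_word) auto
  ultimately show ?thesis using assms(1) by (intro coset_wordsI[of _ _ "flip_word ?p @ flip_word ?q" \<tau>]) simp_all
qed

lemma in_H_cycle_step:
  assumes "\<tau> \<in> cycle_powers k" "y \<in> cycle_generators k" shows "in_H_cycle (\<tau> @ y)"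
proof -
  consider (letter) i where "y = [i]" "1 \<le> i" "i + 1 \<le> k" | (cycle) "y = [1..<Suc k]"
    | (w1) "y = flip_word 1 @ flip_word 2" "1 \<le> k" | (wk) "y = flip_word 1 @ flip_word (Suc k)" "1 \<le> k"
    using assms(2) by (auto simp: cycle_generators_def flip_word_def split: if_splits)
  then show ?thesis
  proof cases
    case letter then show ?thesis using assms(1) by (simp add: in_H_cycle_append_letter)
  next
    case cycle then show ?thesis using in_H_cycle_append_cycle[OF assms(1)] by simp
  next
    case w1 then show ?thesis using assms(1) by (simp add: in_H_cycle_append_flip_words)
  next
    case wk then show ?thesis using assms(1) by (simp add: in_H_cycle_append_flip_words)
  qed
qed

lemma in_H_cycle_generated:
  assumes "in_H_cycle u" shows "\<exists>v\<in>concats (cycle_generators k). Deq n u v"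
proof -
  obtain x \<tau> where x: "in_H n k x" "\<tau> \<in> cycle_powers k" "Deq n u (x @ \<tau>)"
    using assms unfolding coset_words_def by blast
  obtain x0 where x0: "x0 \<in> normal_words k" "Deq n x x0" using x(1) unfolding in_H_def by blast
  obtain a where a: "\<tau> = word_pow [1..<Suc k] a" using x(2) by (rule cycle_powersE)
  have letter: "[i] \<in> cycle_generators k" if "1 \<le> i" "i + 1 \<le> k" for i
    using that by (simp add: cycle_generators_def)
  have "x0 \<in> concats (cycle_generators k)"
  proof (rule normal_words_in_concats[OF _ x0(1)])
    fix j assume j: "1 \<le> j" "j \<le> k"
    have "t_word j \<in> concats (cycle_generators k)" by (rule t_word_in_concats) (use j letter in auto)
    moreover have "w_word j \<in> concats (cycle_generators k)"
    proof (cases "j = k")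
      case True then show ?thesis using j by (intro concats_single) (simp add: cycle_generators_def)
    next
      case False then show ?thesis
        using j letter by (intro w_word_in_concats) (auto simp: cycle_generators_def)
    qed
    ultimately show "t_word j \<in> concats (cycle_generators k) \<and> w_word j \<in> concats (cycle_generators k)" ..
  qed
  moreover have "\<tau> \<in> concats (cycle_generators k)"
    unfolding a by (intro word_pow_in_concats concats_single) (simp add: cycle_generators_def)
  moreover have "Deq n u (x0 @ \<tau>)" using x(3) Deq_append_right[OF x0(2)] by (rule Deq.Deq_trans)
  ultimately show ?thesis by (blast intro: append_in_concats)
qed

lemma in_H_cycle_append: "in_H_cycle u \<Longrightarrow> in_H_cycle v \<Longrightarrow> in_H_cycle (u @ v)"
  by (rule coset_words_append[OF in_H_append in_H_cycle_step in_H_cycle_generated])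

end

definition H_generators :: "nat \<Rightarrow> nat list set" where
  "H_generators m = {[i] | i. 1 \<le> i \<and> i + 1 \<le> m} \<union> {[1, 0], w_word m}"

context H_level
begin

abbreviation in_H_Suc_coset :: "nat list \<Rightarrow> bool" where
  "in_H_Suc_coset \<equiv> coset_words n in_H_cycle {[], w_word (Suc k)}"

lemma in_H_cycle_of_in_H: "in_H n k x \<Longrightarrow> in_H_cycle x"
  by (rule coset_wordsI[of _ _ x "[]"]) (auto simp: Deq.Deq_refl intro: cycle_powersI[of 0, simplified])

lemma in_H_cycle_Nil: "in_H_cycle []"
  by (rule in_H_cycle_of_in_H, rule in_H_normal_word[OF Nil_in_normal_words])

lemma in_H_cycle_Deq: "Deq n u v \<Longrightarrow> in_H_cycle v \<Longrightarrow> in_H_cycle u"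
  by (rule coset_words_Deq)

lemma in_H_cycle_t_word: assumes "j \<le> Suc k" shows "in_H_cycle (t_word j)"
proof (cases "j \<le> k")
  case True then show ?thesis by (intro in_H_cycle_of_in_H in_H_normal_word t_word_in_normal_words)
next
  case False
  then have "t_word j = [] @ [1..<Suc k]" using assms by (simp add: t_word_def le_Suc_eq del: upt_Suc)
  then show ?thesis using in_H_cycle_append_cycle[of "[]"] cycle_powersI[of 0 k] by simp
qed

lemma in_H_cycle_letter: assumes "1 \<le> i" "i \<le> k" shows "in_H_cycle [i]"
proof (rule in_H_cycle_Deq[OF Deq_letter_t_words])
  show "in_H_cycle (rev (t_word i) @ t_word (Suc i))"
    using assms by (intro in_H_cycle_append in_H_cycle_of_in_H in_H_rev in_H_normal_word
        t_word_in_normal_words in_H_cycle_t_word) auto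
qed (use assms level_bound in auto)

lemma in_H_cycle_w1: "1 \<le> k \<Longrightarrow> in_H_cycle [1, 0]"
  using w_word_in_normal_words[of 1 k] by (auto intro: in_H_cycle_of_in_H in_H_normal_word)

lemma in_H_Suc_iff: "in_H n (Suc k) u \<longleftrightarrow> in_H_Suc_coset u"
proof
  assume "in_H n (Suc k) u"
  then obtain y where y: "y \<in> normal_words (Suc k)" "Deq n u y" unfolding in_H_def by blast
  then obtain x a b where x: "y = x @ word_pow (t_word (Suc k)) a @ word_pow (w_word (Suc k)) b"
    "x \<in> normal_words k" "a \<le> k" "b \<le> 1" by (auto elim: normal_words_SucE)
  have cycle: "in_H_cycle (x @ word_pow (t_word (Suc k)) a)"
    using x cycle_powersI[of a k] by (intro coset_wordsI[OF Deq.Deq_refl]) (auto simp: in_H_normal_word t_word_def)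
  have w: "word_pow (w_word (Suc k)) b \<in> {[], w_word (Suc k)}" using x(4) by (cases b) auto
  show "in_H_Suc_coset u" by (rule coset_wordsI[where K = in_H_cycle, OF _ cycle w]) (use y(2) x(1) in simp)
next
  assume "in_H_Suc_coset u"
  then obtain x \<tau> where x: "in_H_cycle x" "\<tau> \<in> {[], w_word (Suc k)}" "Deq n u (x @ \<tau>)"
    unfolding coset_words_def by blast
  obtain x' \<tau>' where x': "in_H n k x'" "\<tau>' \<in> cycle_powers k" "Deq n x (x' @ \<tau>')"
    using x(1) unfolding coset_words_def by blast
  obtain x0 where x0: "x0 \<in> normal_words k" "Deq n x' x0" using x'(1) unfolding in_H_def by blast
  obtain a where a: "\<tau>' = word_pow (t_word (Suc k)) a" "a \<le> k"
    using x'(2) by (auto simp: t_word_def elim: cycle_powersE)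
  obtain b where b: "\<tau> = word_pow (w_word (Suc k)) b" "b \<le> 1"
  proof -
    from x(2) consider "\<tau> = word_pow (w_word (Suc k)) 0" | "\<tau> = word_pow (w_word (Suc k)) 1" by auto
    then show thesis using that[of 0] that[of 1] by cases simp_all
  qed
  have "Deq n u (x0 @ word_pow (t_word (Suc k)) a @ word_pow (w_word (Suc k)) b)"
    using x(3) Deq_append_right[OF x'(3), of \<tau>] Deq_append_right[OF Deq_append_right[OF x0(2)], of \<tau>' \<tau>]
    unfolding a b by (auto intro: Deq.Deq_trans)
  then show "in_H n (Suc k) u" unfolding in_H_def using x0(1) a(2) b(2) by (blast intro: normal_words_SucI)
qed

lemma in_H_Suc_cosetI: "Deq n u (x @ \<tau>) \<Longrightarrow> in_H_cycle x \<Longrightarrow> \<tau> \<in> {[], w_word (Suc k)} \<Longrightarrow> in_H_Suc_coset u"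
  by (rule coset_wordsI)

lemma in_H_Suc_coset_generator:
  assumes "y \<in> H_generators (Suc k)" shows "in_H_Suc_coset y"
proof -
  consider (letter) i where "y = [i]" "1 \<le> i" "i \<le> k" | (w1) "y = [1, 0]" "1 \<le> k"
    | (w) "y = w_word (Suc k)"
    using assms by (cases "k = 0") (auto simp: H_generators_def)
  then show ?thesis
  proof cases
    case letter
    then show ?thesis by (intro in_H_Suc_cosetI[of y y "[]"]) (auto intro: Deq.Deq_refl in_H_cycle_letter)
  next
    case w1
    then show ?thesis using in_H_cycle_w1 by (intro in_H_Suc_cosetI[of y y "[]"]) (auto intro: Deq.Deq_refl)
  next
    case w
    then show ?thesis using in_H_cycle_Nil by (intro in_H_Suc_cosetI[of y "[]" y]) (auto intro: Deq.Deq_refl)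
  qed
qed

lemma in_H_Suc_coset_w_generator:
  assumes "y \<in> H_generators (Suc k)" shows "in_H_Suc_coset (w_word (Suc k) @ y)"
proof -
  let ?w = "w_word (Suc k)"
  from assms consider (letter) i where "y = [i]" "1 \<le> i" "i \<le> k" | (w1) "y = [1, 0]" | (w) "y = ?w"
    by (auto simp: H_generators_def)
  then show ?thesis
  proof cases
    case (letter i)
    show ?thesis
    proof (cases "i = 1")
      case False
      have "Deq n (?w @ [i]) ([i] @ ?w)"
        by (rule Deq_w_word_letter_commute) (use letter False level_bound in auto)
      then show ?thesis using letter by (intro in_H_Suc_cosetI[of _ "[i]" ?w]) (auto intro: in_H_cycle_letter)
    next
      case True
      have "Deq n (?w @ [1]) (([1] @ [1, 0]) @ ?w)"
        using Deq_w_word_s1[of "Suc k" n] letter True level_bound by simp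
      moreover have "in_H_cycle ([1] @ [1, 0])"
        using letter True by (intro in_H_cycle_append in_H_cycle_letter in_H_cycle_w1) auto
      ultimately show ?thesis using letter True by (intro in_H_Suc_cosetI[of _ "[1] @ [1, 0]" ?w]) auto
    qed
  next
    case w1
    show ?thesis
    proof (cases "k = 0")
      case True
      have "Deq n (?w @ y) ([] @ [])" using w1 True Deq_w1_square[of n] level_bound by simp
      then show ?thesis using in_H_cycle_Nil by (intro in_H_Suc_cosetI[of _ "[]" "[]"]) auto
    next
      case False
      have "Deq n (?w @ [1, 0]) ([1, 0] @ ?w)"
        by (rule Deq.Deq_sym, rule Deq_w1_w_word_commute) (use level_bound in auto)
      then show ?thesis using w1 False in_H_cycle_w1 by (intro in_H_Suc_cosetI[of _ "[1, 0]" ?w]) auto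
    qed
  next
    case w
    have "Deq n (?w @ ?w) ([] @ [])" using Deq_w_word_square[of "Suc k" n] level_bound by simp
    then show ?thesis using w in_H_cycle_Nil by (intro in_H_Suc_cosetI[of _ "[]" "[]"]) auto
  qed
qed

lemma in_H_Suc_coset_step:
  "\<tau> \<in> {[], w_word (Suc k)} \<Longrightarrow> y \<in> H_generators (Suc k) \<Longrightarrow> in_H_Suc_coset (\<tau> @ y)"
  using in_H_Suc_coset_generator in_H_Suc_coset_w_generator by auto

lemma in_H_Suc_coset_generated:
  assumes "in_H_Suc_coset u" shows "\<exists>v\<in>concats (H_generators (Suc k)). Deq n u v"
proof -
  obtain y where y: "y \<in> normal_words (Suc k)" "Deq n u y"
    using assms unfolding in_H_Suc_iff[symmetric] in_H_def by blast
  have letter: "[i] \<in> H_generators (Suc k)" if "1 \<le> i" "i \<le> k" for i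
    using that by (simp add: H_generators_def)
  have "y \<in> concats (H_generators (Suc k))"
  proof (rule normal_words_in_concats[OF _ y(1)])
    fix j assume j: "1 \<le> j" "j \<le> Suc k"
    have "t_word j \<in> concats (H_generators (Suc k))" by (rule t_word_in_concats) (use j letter in auto)
    moreover have "w_word j \<in> concats (H_generators (Suc k))"
    proof (cases "j = Suc k")
      case True then show ?thesis by (intro concats_single) (simp add: H_generators_def)
    next
      case False then show ?thesis
        using j letter by (intro w_word_in_concats) (auto simp: H_generators_def)
    qed
    ultimately show "t_word j \<in> concats (H_generators (Suc k)) \<and> w_word j \<in> concats (H_generators (Suc k))" ..
  qed
  then show ?thesis using y(2) by blast
qed

lemma in_H_Suc_coset_rev_generator:
  assumes "y \<in> H_generators (Suc k)" shows "in_H_Suc_coset (rev y)"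
proof -
  have "Deq n (rev y) y"
    using assms Deq_commute_0_1[of n] Deq_rev_w_word[of "Suc k" n] level_bound
    by (auto simp: H_generators_def Deq.Deq_refl)
  then show ?thesis using in_H_Suc_coset_generator[OF assms] by (rule coset_words_Deq)
qed

lemma in_H_Suc_append: "in_H n (Suc k) u \<Longrightarrow> in_H n (Suc k) v \<Longrightarrow> in_H n (Suc k) (u @ v)"
  unfolding in_H_Suc_iff by (rule coset_words_append[OF in_H_cycle_append in_H_Suc_coset_step in_H_Suc_coset_generated])

lemma in_H_Suc_rev: "in_H n (Suc k) u \<Longrightarrow> in_H n (Suc k) (rev u)"
  unfolding in_H_Suc_iff
  using in_H_Suc_iff[of "[]"] in_H_normal_word[OF Nil_in_normal_words]
  by (intro coset_words_rev[OF in_H_cycle_append in_H_Suc_coset_step in_H_Suc_coset_generated in_H_Suc_coset_rev_generator]) auto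

end

lemma in_H_closed:
  assumes "k < n"
  shows "in_H n k u \<Longrightarrow> in_H n k v \<Longrightarrow> in_H n k (u @ v)" and "in_H n k u \<Longrightarrow> in_H n k (rev u)"
proof -
  have "(\<forall>u v. in_H n k u \<longrightarrow> in_H n k v \<longrightarrow> in_H n k (u @ v)) \<and> (\<forall>u. in_H n k u \<longrightarrow> in_H n k (rev u))"
    using assms
  proof (induction k)
    case 0
    have "in_H n 0 u \<longleftrightarrow> Deq n u []" for u unfolding in_H_def by (simp add: normal_words_0)
    then show ?case using Deq_append[of n _ "[]" _ "[]"] Deq_rev[of n _ "[]"] by auto
  next
    case (Suc k)
    then interpret H_level n k by unfold_locales auto
    show ?case using in_H_Suc_append in_H_Suc_rev by blast
  qed
  then show "in_H n k u \<Longrightarrow> in_H n k v \<Longrightarrow> in_H n k (u @ v)" and "in_H n k u \<Longrightarrow> in_H n k (rev u)"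
    by blast+
qed

lemma subgroup_H_set: assumes "m < n" shows "subgroup (H_set n m) (D_group n)"
proof (rule group.subgroupI[OF group_D_group])
  have lists: "x \<in> lists {..<n}" if "x \<in> normal_words m" for x
    using set_normal_words[OF that] assms by auto
  show "H_set n m \<subseteq> carrier (D_group n)" using lists by (auto simp: H_set_eq_image D_carrier)
  show "H_set n m \<noteq> {}" using Nil_in_normal_words by (auto simp: H_set_eq_image)
  have in_H_set: "Dclass n u \<in> H_set n m" if "in_H n m u" for u
    using that by (auto simp: in_H_def H_set_eq_image Dclass_eq_iff)
  fix a b assume "a \<in> H_set n m" "b \<in> H_set n m"
  then obtain x y where xy: "a = Dclass n x" "x \<in> normal_words m" "b = Dclass n y" "y \<in> normal_words m"
    by (auto simp: H_set_eq_image)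
  have "in_H n m (rev x)" by (rule in_H_closed(2)[OF assms in_H_normal_word[OF xy(2)]])
  then show "inv\<^bsub>D_group n\<^esub> a \<in> H_set n m" using xy lists by (simp add: D_inv in_H_set)
  have "in_H n m (x @ y)" by (rule in_H_closed(1)[OF assms in_H_normal_word[OF xy(2)] in_H_normal_word[OF xy(4)]])
  then show "a \<otimes>\<^bsub>D_group n\<^esub> b \<in> H_set n m" using xy by (simp add: D_mult in_H_set)
qed

section \<open>The signed permutation representation\<close>

definition letter_perm :: "nat \<Rightarrow> int \<Rightarrow> int" where
  "letter_perm g x =
    (if g = 0 then (if x = 1 then -2 else if x = 2 then -1 else if x = -1 then 2 else if x = -2 then 1 else x)
     else (if x = int g then int g + 1 else if x = int g + 1 then int g
       else if x = - int g then - int g - 1 else if x = - int g - 1 then - int g else x))"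

fun word_perm :: "nat list \<Rightarrow> int \<Rightarrow> int" where
  "word_perm [] = id"
| "word_perm (g # u) = letter_perm g \<circ> word_perm u"

lemma word_perm_append: "word_perm (u @ v) = word_perm u \<circ> word_perm v"
  by (induction u) auto

lemma letter_perm_involution: "letter_perm g (letter_perm g x) = x"
  unfolding letter_perm_def by auto

lemma letter_perm_minus: "letter_perm g (- x) = - letter_perm g x"
  unfolding letter_perm_def by auto

lemma word_perm_minus: "word_perm u (- x) = - word_perm u x"
  by (induction u arbitrary: x) (auto simp: letter_perm_minus)

lemma word_perm_0: "word_perm u 0 = 0"
  using word_perm_minus[of u 0] by simp

lemma bij_word_perm: "bij (word_perm u)"
proof (induction u)
  case (Cons g u)
  have "bij (letter_perm g)" by (metis bij_betw_byWitness letter_perm_involution subset_UNIV)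
  then show ?case unfolding word_perm.simps by (rule bij_comp[OF Cons.IH])
qed (simp only: word_perm.simps bij_id)

lemma letter_perm_pos:
  "1 \<le> g \<Longrightarrow> letter_perm g x = (if x = int g then x + 1 else if x = int g + 1 then x - 1
     else if x = - int g then x - 1 else if x = - int g - 1 then x + 1 else x)"
  unfolding letter_perm_def by auto

lemma letter_perm_braid:
  assumes "1 \<le> i"
  shows "letter_perm i (letter_perm (i+1) (letter_perm i (letter_perm (i+1) (letter_perm i (letter_perm (i+1) x))))) = x"
proof -
  consider "x = int i" | "x = int i + 1" | "x = int i + 2" | "x = - int i" | "x = - int i - 1" | "x = - int i - 2"
    | "x \<notin> {int i, int i + 1, int i + 2, - int i, - int i - 1, - int i - 2}" by blast
  then show ?thesis by cases (use assms in \<open>simp_all add: letter_perm_pos\<close>)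
qed

definition letter_support :: "nat \<Rightarrow> int set" where
  "letter_support g = (if g = 0 then {1, 2, -1, -2} else {int g, int g + 1, - int g, - int g - 1})"

lemma letter_perm_outside_support: "x \<notin> letter_support g \<Longrightarrow> letter_perm g x = x"
  by (auto simp: letter_perm_def letter_support_def split: if_splits)

lemma letter_perm_in_support: "x \<in> letter_support g \<Longrightarrow> letter_perm g x \<in> letter_support g"
  by (auto simp: letter_perm_def letter_support_def split: if_splits)

lemma letter_perm_commute_disjoint:
  assumes "letter_support g \<inter> letter_support h = {}"
  shows "letter_perm g (letter_perm h (letter_perm g (letter_perm h x))) = x"
proof -
  consider "x \<in> letter_support g" | "x \<in> letter_support h" | "x \<notin> letter_support g" "x \<notin> letter_support h"
    by blast
  then show ?thesis
  proof cases
    case 1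
    then have "x \<notin> letter_support h" "letter_perm g x \<notin> letter_support h"
      using letter_perm_in_support assms by blast+
    then show ?thesis by (simp add: letter_perm_outside_support letter_perm_involution)
  next
    case 2
    then have "x \<notin> letter_support g" "letter_perm h x \<notin> letter_support g"
      using letter_perm_in_support assms by blast+
    then show ?thesis by (simp add: letter_perm_outside_support letter_perm_involution)
  qed (simp add: letter_perm_outside_support)
qed

lemma letter_perm_braid_0_2:
  "letter_perm 0 (letter_perm 2 (letter_perm 0 (letter_perm 2 (letter_perm 0 (letter_perm 2 x))))) = x"
proof -
  consider "x = 1" | "x = 2" | "x = 3" | "x = -1" | "x = -2" | "x = -3" | "x \<notin> {1, 2, 3, -1, -2, -3}" by blast
  then show ?thesis by cases (simp_all add: letter_perm_def)
qed

lemma letter_perm_commute_0_1: "letter_perm 0 (letter_perm 1 (letter_perm 0 (letter_perm 1 x))) = x"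
proof -
  consider "x = 1" | "x = 2" | "x = -1" | "x = -2" | "x \<notin> {1, 2, -1, -2}" by blast
  then show ?thesis by cases (simp_all add: letter_perm_def)
qed

lemma word_perm_relator: assumes "r \<in> D_relators n" shows "word_perm r = id"
proof -
  consider (square) g where "r = [g, g]"
    | (braid) i where "r = concat (replicate 3 [i, i + 1])" "1 \<le> i"
    | (commute) i j where "r = concat (replicate 2 [i, j])" "1 \<le> i" "1 \<le> j" "i + 2 \<le> j \<or> j + 2 \<le> i"
    | (braid_0) "r = concat (replicate 3 [0, 2])"
    | (commute_0) i where "r = concat (replicate 2 [0, i])" "1 \<le> i" "i \<noteq> 2"
    using assms unfolding D_relators_def by (auto split: if_splits)
  then show ?thesis
  proof cases
    case square then show ?thesis by (auto simp: letter_perm_involution)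
  next
    case braid then show ?thesis using letter_perm_braid[of i] by (auto simp: numeral_3_eq_3)
  next
    case commute
    then have "letter_support i \<inter> letter_support j = {}" by (auto simp: letter_support_def)
    then show ?thesis using commute letter_perm_commute_disjoint by (auto simp: numeral_2_eq_2)
  next
    case braid_0 then show ?thesis using letter_perm_braid_0_2 by (auto simp: numeral_3_eq_3)
  next
    case commute_0
    then have "i = 1 \<or> letter_support 0 \<inter> letter_support i = {}" by (auto simp: letter_support_def)
    then show ?thesis using commute_0 letter_perm_commute_0_1 letter_perm_commute_disjoint
      by (auto simp: numeral_2_eq_2)
  qed
qed

lemma word_perm_Deq: "Deq n u v \<Longrightarrow> word_perm u = word_perm v"
proof (induction rule: Deq.induct)
  case (Deq_rel r a b) then show ?case using word_perm_relator[OF Deq_rel] by (simp add: word_perm_append)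
qed auto

lemma word_perm_fixes:
  "(\<And>g. g \<in> set u \<Longrightarrow> x \<notin> letter_support g) \<Longrightarrow> word_perm u x = x"
  by (induction u) (auto simp: letter_perm_outside_support)

lemma word_perm_sign_product:
  assumes "2 \<le> n" "set u \<subseteq> {..<n}" shows "(\<Prod>z\<in>{1..int n}. sgn (word_perm u z)) = 1"
  using assms(2)
proof (induction u rule: rev_induct)
  case Nil then show ?case by (intro prod.neutral) auto
next
  case (snoc g u)
  have IH: "(\<Prod>z\<in>{1..int n}. sgn (word_perm u z)) = 1" using snoc by auto
  have "g < n" using snoc.prems by auto
  have perm_snoc: "word_perm (u @ [g]) z = word_perm u (letter_perm g z)" for z
    by (simp add: word_perm_append)
  show ?case
  proof (cases "g = 0")
    case False
    have "bij_betw (letter_perm g) {1..int n} {1..int n}"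
      by (rule bij_betwI[of _ _ _ "letter_perm g"])
        (use False \<open>g < n\<close> in \<open>auto simp: letter_perm_def letter_perm_involution\<close>)
    then show ?thesis
      unfolding perm_snoc using prod.reindex_bij_betw[of "letter_perm g", of _ _ "\<lambda>z. sgn (word_perm u z)"] IH
      by simp
  next
    case True
    have split: "{1..int n} = insert 1 (insert 2 {3..int n})" using assms(1) by auto
    have "(\<Prod>z\<in>{3..int n}. sgn (word_perm (u @ [g]) z)) = (\<Prod>z\<in>{3..int n}. sgn (word_perm u z))"
      by (rule prod.cong) (auto simp: word_perm_append True letter_perm_def)
    then show ?thesis
      using IH unfolding split by (simp add: word_perm_append True letter_perm_def word_perm_minus sgn_minus mult.left_commute)
  qed
qed

lemma word_perm_cycle:
  "1 \<le> K \<Longrightarrow> 1 \<le> z \<Longrightarrow> z \<le> int K \<Longrightarrow> word_perm [1..<K] z = (if z < int K then z + 1 else 1)"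
proof (induction K arbitrary: z rule: nat_induct_at_least)
  case base then show ?case by simp
next
  case (Suc K)
  have split: "word_perm [1..<Suc K] z = word_perm [1..<K] (letter_perm K z)"
    using Suc.hyps by (simp add: word_perm_append)
  have fix_K: "word_perm [1..<K] (int K + 1) = int K + 1"
    by (rule word_perm_fixes) (auto simp: letter_support_def)
  consider "z < int K" | "z = int K" | "z = int K + 1" using Suc.prems by linarith
  then show ?case
  proof cases
    case 1
    then have "letter_perm K z = z" using Suc.hyps Suc.prems by (auto simp: letter_perm_def)
    then show ?thesis using Suc.IH[of z] Suc.prems 1 split by simp
  next
    case 2
    then have "letter_perm K z = int K + 1" using Suc.hyps by (auto simp: letter_perm_def)
    then show ?thesis using fix_K 2 split by simp
  next
    case 3
    then have "letter_perm K z = int K" using Suc.hyps by (auto simp: letter_perm_def)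
    then show ?thesis using Suc.IH[of "int K"] 3 split Suc.hyps by simp
  qed
qed

lemma word_perm_cycle_pow:
  "1 \<le> z \<Longrightarrow> z \<le> int K \<Longrightarrow> a < K \<Longrightarrow>
    word_perm (word_pow [1..<K] a) z = (if z + int a \<le> int K then z + int a else z + int a - int K)"
proof (induction a)
  case 0 then show ?case by simp
next
  case (Suc a)
  let ?v = "if z + int a \<le> int K then z + int a else z + int a - int K"
  have "word_perm (word_pow [1..<K] (Suc a)) z = word_perm [1..<K] ?v"
    using Suc by (simp add: word_pow_Suc word_perm_append)
  also have "\<dots> = (if ?v < int K then ?v + 1 else 1)"
    by (rule word_perm_cycle) (use Suc.prems in auto)
  finally show ?case using Suc.prems by auto
qed

lemma word_perm_w_word:
  "1 \<le> j \<Longrightarrow> word_perm (w_word j) x = (if x \<in> {1, -1, int j + 1, - int j - 1} then - x else x)"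
proof (induction j arbitrary: x rule: nat_induct_at_least)
  case base then show ?case by (simp add: letter_perm_def)
next
  case (Suc j)
  have "word_perm (w_word (Suc j)) x = letter_perm (Suc j) (word_perm (w_word j) (letter_perm (Suc j) x))"
    using w_word_Suc[OF Suc.hyps] by (simp add: word_perm_append)
  then show ?case using Suc.IH Suc.hyps by (auto simp: letter_perm_def)
qed

section \<open>Normal words are separated by the representation\<close>

lemma word_perm_normal_word_fixes:
  assumes "x \<in> normal_words k" "int k + 1 < \<bar>z\<bar>" shows "word_perm x z = z"
proof (rule word_perm_fixes)
  fix g assume g: "g \<in> set x"
  have "k \<noteq> 0"
  proof
    assume "k = 0"
    then show False using g assms(1) by (simp add: normal_words_0)
  qed
  moreover have "g \<le> k" using g set_normal_words[OF assms(1)] by auto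
  ultimately show "z \<notin> letter_support g" using assms(2) unfolding letter_support_def by auto
qed

lemma word_perm_word_pow_maps: "word_perm u ` S \<subseteq> S \<Longrightarrow> word_perm (word_pow u a) ` S \<subseteq> S"
  by (induction a) (auto simp: word_pow_Suc word_perm_append)

lemma letter_perm_signed_set:
  "1 \<le> g \<Longrightarrow> g + 1 \<le> l \<Longrightarrow> x \<in> signed_set l \<Longrightarrow> letter_perm g x \<in> signed_set l"
  unfolding signed_set_def letter_perm_def by auto

lemma word_perm_letters_maps:
  "(\<And>g. g \<in> set u \<Longrightarrow> 1 \<le> g \<and> g + 1 \<le> l) \<Longrightarrow> word_perm u ` signed_set l \<subseteq> signed_set l"
  by (induction u) (auto simp: letter_perm_signed_set)

lemma word_perm_t_word_maps: "j \<le> l \<Longrightarrow> word_perm (t_word j) ` signed_set l \<subseteq> signed_set l"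
  by (rule word_perm_letters_maps) (auto simp: set_t_word)

lemma word_perm_w_word_maps: "1 \<le> j \<Longrightarrow> j \<le> l \<Longrightarrow> word_perm (w_word j) ` signed_set l \<subseteq> signed_set l"
  by (auto simp: signed_set_def word_perm_w_word)

lemma word_perm_normal_word_signed_set:
  assumes "x \<in> normal_words k" "k \<le> l" shows "word_perm x ` signed_set l = signed_set l"
proof -
  have "word_perm x ` signed_set l \<subseteq> signed_set l"
    using assms
  proof (induction k arbitrary: x)
    case 0 then show ?case by (simp add: normal_words_0)
  next
    case (Suc k)
    then obtain y a b where x: "x = y @ word_pow (t_word (Suc k)) a @ word_pow (w_word (Suc k)) b"
      and y: "y \<in> normal_words k" by (auto elim: normal_words_SucE)
    have "word_perm y ` signed_set l \<subseteq> signed_set l" using Suc y by simp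
    moreover have "word_perm (word_pow (t_word (Suc k)) a) ` signed_set l \<subseteq> signed_set l"
      using Suc.prems by (intro word_perm_word_pow_maps word_perm_t_word_maps) simp
    moreover have "word_perm (word_pow (w_word (Suc k)) b) ` signed_set l \<subseteq> signed_set l"
      using Suc.prems by (intro word_perm_word_pow_maps word_perm_w_word_maps) simp_all
    ultimately show ?case unfolding x word_perm_append image_comp[symmetric] by (meson image_mono order_trans)
  qed
  moreover have "finite (signed_set l)" by (simp add: signed_set_def)
  ultimately show ?thesis
    using endo_inj_surj inj_on_subset[OF bij_is_inj[OF bij_word_perm[of x]]] by blast
qed

text \<open>A normal word of level \<open>k\<close> permutes \<open>\<plusminus>{1..k}\<close> and fixes everything beyond \<open>k + 1\<close>,
  so it can only send \<open>k + 1\<close> to \<open>\<plusminus>(k + 1)\<close>.\<close>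
lemma word_perm_normal_word_edge:
  assumes "x \<in> normal_words k" shows "word_perm x (int k + 1) \<in> {int k + 1, - (int k + 1)}"
proof -
  let ?e = "int k + 1" and ?S = "signed_set k"
  have inj: "inj (word_perm x)" by (rule bij_is_inj[OF bij_word_perm])
  have "?e \<notin> ?S" by (simp add: signed_set_def)
  then have "word_perm x ?e \<notin> word_perm x ` ?S" using inj by (auto dest: injD)
  then have "word_perm x ?e \<notin> ?S" by (simp add: word_perm_normal_word_signed_set[OF assms order_refl])
  moreover have "\<not> ?e < \<bar>word_perm x ?e\<bar>"
  proof
    assume "?e < \<bar>word_perm x ?e\<bar>"
    then have "word_perm x (word_perm x ?e) = word_perm x ?e" by (rule word_perm_normal_word_fixes[OF assms])
    then have "word_perm x ?e = ?e" using inj by (auto dest: injD)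
    then show False using \<open>?e < \<bar>word_perm x ?e\<bar>\<close> by simp
  qed
  moreover have "word_perm x ?e \<noteq> 0"
  proof
    assume "word_perm x ?e = 0"
    then have "?e = 0" using inj word_perm_0[of x] by (metis injD)
    then show False by simp
  qed
  ultimately show ?thesis unfolding signed_set_def by auto
qed

lemma word_perm_normal_word_edge_inverse:
  assumes "x \<in> normal_words k" "word_perm x z \<in> {int k + 1, - (int k + 1)}"
  shows "z \<in> {int k + 1, - (int k + 1)}"
proof -
  have inj: "inj (word_perm x)" by (rule bij_is_inj[OF bij_word_perm])
  have "word_perm x z \<in> {word_perm x (int k + 1), word_perm x (- (int k + 1))}"
    using word_perm_normal_word_edge[OF assms(1)] assms(2) word_perm_minus[of x "int k + 1"] by auto
  then show ?thesis using inj by (auto simp: inj_eq)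
qed

text \<open>The last two factors of a normal word of level \<open>k + 1\<close> are read off from its action:
  \<open>w\<^sub>k\<^sub>+\<^sub>1\<^sup>b\<close> from the sign of the image of \<open>k + 2\<close>, and then \<open>t\<^sub>k\<^sub>+\<^sub>1\<^sup>a\<close> from which element of
  \<open>{1..k + 1}\<close> it moves to \<open>\<plusminus>(k + 1)\<close>.\<close>
lemma word_perm_normal_words_Suc_inj:
  assumes x: "x \<in> normal_words k" and y: "y \<in> normal_words k"
    and a: "a \<le> k" "a' \<le> k" and b: "b \<le> 1" "b' \<le> 1"
    and eq: "word_perm (x @ word_pow (t_word (Suc k)) a @ word_pow (w_word (Suc k)) b)
           = word_perm (y @ word_pow (t_word (Suc k)) a' @ word_pow (w_word (Suc k)) b')"
  shows "a = a' \<and> b = b' \<and> word_perm x = word_perm y"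
proof -
  let ?t = "t_word (Suc k)" and ?w = "w_word (Suc k)"
  let ?e = "int k + 1" and ?z = "int k + 2"
  have surj: "surj (word_perm u)" for u by (rule bij_is_surj[OF bij_word_perm])
  have t_fixes: "word_perm (word_pow ?t e) z = z" if "?e < \<bar>z\<bar>" for e z
    by (rule word_perm_fixes) (use that set_word_pow[of ?t e] in \<open>auto simp: set_t_word letter_support_def\<close>)
  have value_z: "word_perm (u @ word_pow ?t e @ word_pow ?w f) ?z = (if f = 1 then - ?z else ?z)"
    if "u \<in> normal_words k" "f \<le> 1" for u e f
    using that t_fixes[of ?z e] t_fixes[of "- ?z" e] word_perm_normal_word_fixes[OF that(1), of ?z]
      word_perm_normal_word_fixes[OF that(1), of "- ?z"]
    by (cases f) (auto simp: word_perm_append word_perm_w_word)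
  have bb: "b = b'" using value_z[OF x b(1), of a] value_z[OF y b(2), of a'] eq b by (auto split: if_splits)
  have eq_t: "word_perm x \<circ> word_perm (word_pow ?t a) = word_perm y \<circ> word_perm (word_pow ?t a')"
    using eq bb surj[of "word_pow ?w b"] by (simp add: word_perm_append comp_assoc surj_fun_eq)
  let ?s = "?e - int a"
  have "word_perm y (word_perm (word_pow ?t a') ?s) = word_perm x (word_perm (word_pow ?t a) ?s)"
    using fun_cong[OF eq_t, of ?s] by simp
  also have "word_perm (word_pow ?t a) ?s = ?e"
    using a word_perm_cycle_pow[of ?s "Suc k" a] by (simp add: t_word_def)
  finally have "word_perm (word_pow ?t a') ?s \<in> {?e, - ?e}"
    using word_perm_normal_word_edge[OF x] word_perm_normal_word_edge_inverse[OF y] by simp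
  then have aa: "a = a'"
    using a word_perm_cycle_pow[of ?s "Suc k" a'] by (auto simp: t_word_def split: if_splits)
  have "word_perm x = word_perm y"
    using eq_t aa surj[of "word_pow ?t a"] by (simp add: surj_fun_eq)
  then show ?thesis using aa bb by simp
qed

lemma word_perm_inj_on_normal_words: "inj_on word_perm (normal_words k)"
proof (induction k)
  case 0 then show ?case by (simp add: normal_words_0)
next
  case (Suc k)
  show ?case
  proof (rule inj_onI)
    fix x y assume "x \<in> normal_words (Suc k)" "y \<in> normal_words (Suc k)" and eq: "word_perm x = word_perm y"
    then obtain x' a b y' a' b' where
      x: "x = x' @ word_pow (t_word (Suc k)) a @ word_pow (w_word (Suc k)) b" "x' \<in> normal_words k" "a \<le> k" "b \<le> 1" and
      y: "y = y' @ word_pow (t_word (Suc k)) a' @ word_pow (w_word (Suc k)) b'" "y' \<in> normal_words k" "a' \<le> k" "b' \<le> 1"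
      by (auto elim!: normal_words_SucE)
    have "a = a' \<and> b = b' \<and> word_perm x' = word_perm y'"
      by (rule word_perm_normal_words_Suc_inj[OF x(2) y(2) x(3) y(3) x(4) y(4)]) (use eq x y in simp)
    then show "x = y" using Suc.IH x y by (simp add: inj_on_eq_iff)
  qed
qed

lemma card_normal_words: "card (normal_words k) = 2 ^ k * fact k"
proof (induction k)
  case 0 then show ?case by (simp add: normal_words_0)
next
  case (Suc k)
  let ?f = "\<lambda>(x, a, b). x @ word_pow (t_word (Suc k)) a @ word_pow (w_word (Suc k)) b"
  have image: "normal_words (Suc k) = ?f ` (normal_words k \<times> {..k} \<times> {..1})"
  proof (intro equalityI subsetI)
    fix u assume "u \<in> normal_words (Suc k)"
    then obtain x a b where "u = ?f (x, a, b)" "(x, a, b) \<in> normal_words k \<times> {..k} \<times> {..1}"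
      by (auto elim: normal_words_SucE)
    then show "u \<in> ?f ` (normal_words k \<times> {..k} \<times> {..1})" by blast
  qed (auto intro: normal_words_SucI)
  have "inj_on ?f (normal_words k \<times> {..k} \<times> {..1})"
  proof (rule inj_onI, clarsimp)
    fix x a b y a' b'
    assume x: "x \<in> normal_words k" "a \<le> k" "b \<le> Suc 0" and y: "y \<in> normal_words k" "a' \<le> k" "b' \<le> Suc 0"
      and eq: "x @ word_pow (t_word (Suc k)) a @ word_pow (w_word (Suc k)) b
             = y @ word_pow (t_word (Suc k)) a' @ word_pow (w_word (Suc k)) b'"
    have "a = a' \<and> b = b' \<and> word_perm x = word_perm y"
      by (rule word_perm_normal_words_Suc_inj[OF x(1) y(1) x(2) y(2)]) (use x y eq in simp_all)
    then show "x = y \<and> a = a' \<and> b = b'"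
      using word_perm_inj_on_normal_words[of k] x(1) y(1) by (auto dest: inj_onD)
  qed
  then have "card (normal_words (Suc k)) = card (normal_words k) * (Suc k * 2)"
    unfolding image by (simp add: card_image card_cartesian_product)
  then show ?case using Suc by (simp add: algebra_simps)
qed

section \<open>The order of \<open>B\<^sub>m\<close>\<close>

lemma signed_set_iff: "z \<in> signed_set m \<longleftrightarrow> z \<noteq> 0 \<and> \<bar>z\<bar> \<le> int m"
  unfolding signed_set_def by auto

lemma B_group_abs_permutes:
  assumes "\<sigma> \<in> carrier (B_group m)"
  shows "(\<lambda>z. if z \<in> {1..int m} then \<bar>\<sigma> z\<bar> else z) permutes {1..int m}"
    (is "?p permutes ?P")
proof -
  let ?S = "signed_set m"
  have bij: "bij_betw \<sigma> ?S ?S" and odd: "\<forall>x\<in>?S. \<sigma> (- x) = - \<sigma> x"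
    using assms unfolding B_group_def by auto
  have PS: "?P \<subseteq> ?S" by (auto simp: signed_set_iff)
  have into: "?p ` ?P \<subseteq> ?P"
    using bij_betwE[OF bij] PS by (force simp: signed_set_iff)
  have "inj_on ?p ?P"
  proof (rule inj_onI)
    fix x y assume xy: "x \<in> ?P" "y \<in> ?P" "?p x = ?p y"
    then have "\<sigma> x = \<sigma> y \<or> \<sigma> x = \<sigma> (- y)" using odd PS by (auto simp: abs_eq_iff)
    moreover have "x \<in> ?S" "y \<in> ?S" "- y \<in> ?S" using xy by (auto simp: signed_set_iff)
    ultimately have "x = y \<or> x = - y"
      by (auto simp: inj_on_eq_iff[OF bij_betw_imp_inj_on[OF bij]])
    then show "x = y" using xy by auto
  qed
  then have "bij_betw ?p ?P ?P" using endo_inj_surj[OF _ into] by (simp add: bij_betw_def)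
  then show ?thesis by (rule bij_imp_permutes) auto
qed

lemma B_group_eqI:
  assumes "\<sigma> \<in> carrier (B_group m)" "\<tau> \<in> carrier (B_group m)" "\<And>z. z \<in> {1..int m} \<Longrightarrow> \<sigma> z = \<tau> z"
  shows "\<sigma> = \<tau>"
proof
  fix z
  have odd: "\<sigma> (- x) = - \<sigma> x" "\<tau> (- x) = - \<tau> x" if "x \<in> signed_set m" for x
    using assms(1,2) that unfolding B_group_def by auto
  have outside: "\<sigma> x = x" "\<tau> x = x" if "x \<notin> signed_set m" for x
    using assms(1,2) that unfolding B_group_def by auto
  consider "z \<in> {1..int m}" | "- z \<in> {1..int m}" | "z \<notin> signed_set m"
    unfolding signed_set_iff by fastforce
  then show "\<sigma> z = \<tau> z"
  proof cases
    case 2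
    then have "\<sigma> z = - \<sigma> (- z)" "\<tau> z = - \<tau> (- z)"
      using odd[of "- z"] by (auto simp: signed_set_iff)
    then show ?thesis using assms(3)[OF 2] by simp
  qed (use assms(3) outside in auto)
qed

text \<open>An element of \<open>B\<^sub>m\<close> is determined by the permutation of \<open>{1..m}\<close> it induces up to sign
  and by the signs of the images of \<open>1, \<dots>, m\<close>.\<close>
lemma B_group_finite_card_le: "finite (carrier (B_group m)) \<and> card (carrier (B_group m)) \<le> 2 ^ m * fact m"
proof -
  let ?P = "{1..int m}" and ?C = "carrier (B_group m)"
  define F where "F \<sigma> = ((\<lambda>z. if z \<in> ?P then \<bar>\<sigma> z\<bar> else z), restrict (\<lambda>z. sgn (\<sigma> z)) ?P)" for \<sigma> :: "int \<Rightarrow> int"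
  let ?T = "{p. p permutes ?P} \<times> (?P \<rightarrow>\<^sub>E {-1, 1::int})"
  have "F \<sigma> \<in> ?T" if C: "\<sigma> \<in> ?C" for \<sigma>
  proof -
    have "\<sigma> z \<in> signed_set m" if "z \<in> ?P" for z
      using C that bij_betwE[of \<sigma> "signed_set m" "signed_set m"] by (auto simp: B_group_def signed_set_iff)
    then have "restrict (\<lambda>z. sgn (\<sigma> z)) ?P \<in> ?P \<rightarrow>\<^sub>E {-1, 1}" by (auto simp: signed_set_iff sgn_if)
    then show ?thesis using B_group_abs_permutes[OF C] by (simp add: F_def)
  qed
  then have "F ` ?C \<subseteq> ?T" by blast
  moreover have "inj_on F ?C"
  proof (rule inj_onI)
    fix \<sigma> \<tau> assume C: "\<sigma> \<in> ?C" "\<tau> \<in> ?C" and eq: "F \<sigma> = F \<tau>"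
    have "\<sigma> z = \<tau> z" if "z \<in> ?P" for z
      using fun_cong[OF arg_cong[OF eq, of fst], of z] fun_cong[OF arg_cong[OF eq, of snd], of z] that
      by (simp add: F_def) (metis sgn_mult_abs)
    then show "\<sigma> = \<tau>" by (rule B_group_eqI[OF C])
  qed
  moreover have "finite ?T" by (intro finite_cartesian_product finite_permutations finite_PiE) auto
  moreover have "card ?T = fact m * 2 ^ m"
    by (simp add: card_cartesian_product card_permutations card_PiE numeral_2_eq_2)
  ultimately show ?thesis
    using finite_imageD[OF finite_subset] card_inj_on_le by (metis mult.commute)
qed

section \<open>The isomorphism\<close>

definition restrict_signed :: "nat \<Rightarrow> (int \<Rightarrow> int) \<Rightarrow> int \<Rightarrow> int" where
  "restrict_signed m \<sigma> z = (if z \<in> signed_set m then \<sigma> z else z)"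

lemma restrict_signed_comp:
  "g ` signed_set m \<subseteq> signed_set m \<Longrightarrow> restrict_signed m (f \<circ> g) = restrict_signed m f \<circ> restrict_signed m g"
  unfolding restrict_signed_def by (auto simp: fun_eq_iff)

lemma restrict_signed_word_perm_in_B_group:
  assumes "x \<in> normal_words m" shows "restrict_signed m (word_perm x) \<in> carrier (B_group m)"
proof -
  let ?S = "signed_set m"
  have "bij_betw (word_perm x) ?S ?S"
    using word_perm_normal_word_signed_set[OF assms order_refl] bij_word_perm[of x]
    by (simp add: bij_betw_def inj_on_subset[OF bij_is_inj])
  then have "bij_betw (restrict_signed m (word_perm x)) ?S ?S"
    by (rule bij_betw_cong[THEN iffD1, rotated]) (simp add: restrict_signed_def)
  moreover have "\<forall>z\<in>?S. restrict_signed m (word_perm x) (- z) = - restrict_signed m (word_perm x) z"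
    by (auto simp: restrict_signed_def signed_set_def word_perm_minus)
  ultimately show ?thesis by (simp add: B_group_def restrict_signed_def)
qed

text \<open>Two normal words of level \<open>m\<close> acting alike on \<open>\<plusminus>{1..m}\<close> also agree at \<open>m + 1\<close>, where
  the sign is forced by the parity of sign changes.\<close>
lemma word_perm_eq_if_restrict_signed_eq:
  assumes x: "x \<in> normal_words m" and y: "y \<in> normal_words m" and "0 < m" "m < n"
    and eq: "restrict_signed m (word_perm x) = restrict_signed m (word_perm y)"
  shows "word_perm x = word_perm y"
proof -
  let ?S = "signed_set m" and ?e = "int m + 1" and ?P = "{1..int n} - {int m + 1}"
  have on_S: "word_perm x z = word_perm y z" if "z \<in> ?S" for z
    using fun_cong[OF eq, of z] that by (simp add: restrict_signed_def)
  have far: "word_perm x z = word_perm y z" if "?e < \<bar>z\<bar>" for z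
    using word_perm_normal_word_fixes[OF x that] word_perm_normal_word_fixes[OF y that] by simp
  have sign_product: "sgn (word_perm u ?e) * (\<Prod>z\<in>?P. sgn (word_perm u z)) = 1" if "u \<in> normal_words m" for u
  proof -
    have "set u \<subseteq> {..<n}" using set_normal_words[OF that] \<open>m < n\<close> by auto
    then show ?thesis using word_perm_sign_product[of n u] \<open>0 < m\<close> \<open>m < n\<close>
      prod.remove[of "{1..int n}" ?e "\<lambda>z. sgn (word_perm u z)"] by auto
  qed
  have "word_perm x z = word_perm y z" if "z \<in> ?P" for z
  proof (cases "z \<in> ?S")
    case False
    then have "?e < \<bar>z\<bar>" using that by (auto simp: signed_set_def)
    then show ?thesis by (rule far)
  qed (rule on_S)
  then have "(\<Prod>z\<in>?P. sgn (word_perm x z)) = (\<Prod>z\<in>?P. sgn (word_perm y z))"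
    by (intro prod.cong) auto
  then have "sgn (word_perm x ?e) = sgn (word_perm y ?e)"
    using sign_product[OF x] sign_product[OF y] by (metis mult_cancel_right mult_zero_right zero_neq_one)
  then have edge: "word_perm x ?e = word_perm y ?e"
    using word_perm_normal_word_edge[OF x] word_perm_normal_word_edge[OF y] by (auto simp: sgn_if)
  show ?thesis
  proof
    fix z
    consider "z \<in> ?S" | "z = ?e" | "z = - ?e" | "?e < \<bar>z\<bar>" | "z = 0" unfolding signed_set_def by force
    then show "word_perm x z = word_perm y z"
    proof cases
      case 3 then show ?thesis using edge word_perm_minus[of x ?e] word_perm_minus[of y ?e] by simp
    qed (use on_S edge far in \<open>auto simp: word_perm_0\<close>)
  qed
qed

definition H_to_B :: "nat \<Rightarrow> nat list set \<Rightarrow> int \<Rightarrow> int" where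
  "H_to_B m A = restrict_signed m (word_perm (SOME u. u \<in> A))"

lemma H_to_B_Dclass: "H_to_B m (Dclass n x) = restrict_signed m (word_perm x)"
proof -
  have "(SOME u. u \<in> Dclass n x) \<in> Dclass n x" by (rule someI, rule Dclass_self)
  then show ?thesis unfolding H_to_B_def Dclass_def using word_perm_Deq by fastforce
qed

lemma H_to_B_hom: "H_to_B m \<in> hom ((D_group n)\<lparr>carrier := H_set n m\<rparr>) (B_group m)"
proof (rule homI)
  fix A assume "A \<in> carrier ((D_group n)\<lparr>carrier := H_set n m\<rparr>)"
  then show "H_to_B m A \<in> carrier (B_group m)"
    by (auto simp: H_set_eq_image H_to_B_Dclass restrict_signed_word_perm_in_B_group)
next
  fix A B assume "A \<in> carrier ((D_group n)\<lparr>carrier := H_set n m\<rparr>)" "B \<in> carrier ((D_group n)\<lparr>carrier := H_set n m\<rparr>)"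
  then obtain x y where xy: "A = Dclass n x" "B = Dclass n y" "y \<in> normal_words m"
    by (auto simp: H_set_eq_image)
  have "word_perm y ` signed_set m \<subseteq> signed_set m"
    by (simp add: word_perm_normal_word_signed_set[OF xy(3) order_refl])
  then show "H_to_B m (A \<otimes>\<^bsub>(D_group n)\<lparr>carrier := H_set n m\<rparr>\<^esub> B) = H_to_B m A \<otimes>\<^bsub>B_group m\<^esub> H_to_B m B"
    by (simp add: xy D_mult H_to_B_Dclass word_perm_append restrict_signed_comp B_group_def)
qed

lemma inj_on_H_to_B: assumes "0 < m" "m < n" shows "inj_on (H_to_B m) (H_set n m)"
proof (rule inj_onI)
  fix A B assume "A \<in> H_set n m" "B \<in> H_set n m" and eq: "H_to_B m A = H_to_B m B"
  then obtain x y where xy: "A = Dclass n x" "x \<in> normal_words m" "B = Dclass n y" "y \<in> normal_words m"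
    by (auto simp: H_set_eq_image)
  have "word_perm x = word_perm y"
    by (rule word_perm_eq_if_restrict_signed_eq[OF xy(2,4) assms]) (use eq xy in \<open>simp add: H_to_B_Dclass\<close>)
  then show "A = B" using inj_onD[OF word_perm_inj_on_normal_words] xy by metis
qed

lemma card_H_set: "card (H_set n m) = 2 ^ m * fact m"
proof -
  have "inj_on (Dclass n) (normal_words m)"
    by (rule inj_onI) (auto simp: Dclass_eq_iff dest: word_perm_Deq intro: inj_onD[OF word_perm_inj_on_normal_words])
  then show ?thesis by (simp add: H_set_eq_image card_image card_normal_words)
qed

theorem mainTheorem3:
  fixes n m :: nat
  assumes "0 < m" and "m < n"
  shows "subgroup (H_set n m) (D_group n)
         \<and> (D_group n)\<lparr>carrier := H_set n m\<rparr> \<cong> B_group m"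
proof
  show "subgroup (H_set n m) (D_group n)" by (rule subgroup_H_set[OF assms(2)])
  have hom: "H_to_B m \<in> hom ((D_group n)\<lparr>carrier := H_set n m\<rparr>) (B_group m)" by (rule H_to_B_hom)
  then have into: "H_to_B m ` H_set n m \<subseteq> carrier (B_group m)" by (auto simp: hom_def)
  have inj: "inj_on (H_to_B m) (H_set n m)" by (rule inj_on_H_to_B[OF assms])
  have "H_to_B m ` H_set n m = carrier (B_group m)"
    using B_group_finite_card_le[of m] card_image[OF inj] card_H_set into
    by (intro card_seteq) auto
  with inj hom show "(D_group n)\<lparr>carrier := H_set n m\<rparr> \<cong> B_group m"
    by (intro is_isoI) (simp add: iso_def bij_betw_def)
qed

end
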